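(* Let $T$ be a tree with positive edge weights rooted at the homebase $r$, in which no vertex other than $r$ has exactly one child, and let $q\ge 0$. Compute labels $\Lambda_v=(\Lambda_v.k,\Lambda_v.u_l,\Lambda_v.u_c)$ for all $v$ recursively from the leaves up: for a leaf $v$, $\Lambda_v=(1,v,\mathrm{null})$; for a non-leaf $v$, with $d_r=d(r,v)+q$, $\Lambda_v.k=\max\{1,\sum_{u\in c(v)}(\Lambda_u.k-\mathbb{1}[\Lambda_u.k=1\text{ and }d(v,\Lambda_u.u_l)\le d_r])\}$, $\Lambda_v.u_c$ is a child $u$ of $v$ maximizing $d(v,\Lambda_u.u_l)$, and $\Lambda_v.u_l=\Lambda_{\Lambda_v.u_c}.u_l$. Then build the strategy $\mathcal{S}$ (procedure CostExpl) recursively: first invoke $\Lambda_r.k$ agents at $r$; at a non-leaf vertex $v$ (with agents present at $v$), order its children as $c_1,\dots,c_l$ with $c_l=\Lambda_v.u_c$ (the others in arbitrary order), and for $i=1,\dots,l$: move $\Lambda_{c_i}.k$ agents from $v$ along $(v,c_i)$, apply the construction recursively at $c_i$, and then, if $c_i\ne\Lambda_v.u_c$ and $d(v,\Lambda_{c_i}.u_l)\le d(r,v)+q$, send the agent located at $\Lambda_{c_i}.u_l$ back to $v$. Then $\mathcal{S}$ explores $T$ and is cost-optimal.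
   Context: Exploration model: given a connected graph with positive edge weights, a homebase vertex, and invoking cost $q\ge 0$, a strategy is a sequence of moves, each either invoking a new agent (appearing at the homebase) or an agent traversing an edge incident to its current vertex. A vertex is explored when first visited; the strategy explores the graph when every vertex has been visited by some agent (agents need not return). With $k$ agents, agent $i$ traversing total distance $d_i$ (weights counted with multiplicity), the cost is $kq+\sum_i d_i$; a strategy is cost-optimal if it explores the graph with minimum cost (off-line setting). For the rooted tree: $c(v)$ is the set of children of $v$, a leaf is a non-root vertex with no children, and $d(\cdot,\cdot)$ is weighted distance. *)

theory Defs
  imports Complex_Main
begin

text \<open>A move either invokes a new agent (appearing at the homebase) or lets
  agent number i (agents are numbered 0,1,... in order of invocation) traverse
  the edge from its current vertex to the vertex y.\<close>
datatype 'v move = Invoke | Move nat 'v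

text \<open>Configuration = list of current agent positions.\<close>
fun step :: "'v \<Rightarrow> 'v list \<Rightarrow> 'v move \<Rightarrow> 'v list" where
  "step h pos Invoke = pos @ [h]"
| "step h pos (Move i y) = pos[i := y]"

definition run :: "'v \<Rightarrow> 'v list \<Rightarrow> 'v move list \<Rightarrow> 'v list" where
  "run h pos ms = foldl (step h) pos ms"

fun valid_moves :: "('v \<Rightarrow> 'v \<Rightarrow> bool) \<Rightarrow> 'v \<Rightarrow> 'v list \<Rightarrow> 'v move list \<Rightarrow> bool" where
  "valid_moves adj h pos [] = True"
| "valid_moves adj h pos (Invoke # ms) = valid_moves adj h (step h pos Invoke) ms"
| "valid_moves adj h pos (Move i y # ms) =
     (i < length pos \<and> adj (pos ! i) y \<and> valid_moves adj h (step h pos (Move i y)) ms)"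

fun visited :: "'v \<Rightarrow> 'v list \<Rightarrow> 'v move list \<Rightarrow> 'v set" where
  "visited h pos [] = set pos"
| "visited h pos (m # ms) = set pos \<union> visited h (step h pos m) ms"

fun move_cost :: "('v \<Rightarrow> 'v \<Rightarrow> real) \<Rightarrow> real \<Rightarrow> 'v \<Rightarrow> 'v list \<Rightarrow> 'v move list \<Rightarrow> real" where
  "move_cost wt q h pos [] = 0"
| "move_cost wt q h pos (Invoke # ms) = q + move_cost wt q h (step h pos Invoke) ms"
| "move_cost wt q h pos (Move i y # ms) = wt (pos ! i) y + move_cost wt q h (step h pos (Move i y)) ms"

definition explores :: "'v set \<Rightarrow> ('v \<Rightarrow> 'v \<Rightarrow> bool) \<Rightarrow> 'v \<Rightarrow> 'v move list \<Rightarrow> bool" where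
  "explores V adj h S \<longleftrightarrow> valid_moves adj h [] S \<and> V \<subseteq> visited h [] S"

definition cost :: "('v \<Rightarrow> 'v \<Rightarrow> real) \<Rightarrow> real \<Rightarrow> 'v \<Rightarrow> 'v move list \<Rightarrow> real" where
  "cost wt q h S = move_cost wt q h [] S"

definition cost_optimal ::
  "'v set \<Rightarrow> ('v \<Rightarrow> 'v \<Rightarrow> bool) \<Rightarrow> ('v \<Rightarrow> 'v \<Rightarrow> real) \<Rightarrow> real \<Rightarrow> 'v \<Rightarrow> 'v move list \<Rightarrow> bool" where
  "cost_optimal V adj wt q h S \<longleftrightarrow>
     explores V adj h S \<and> (\<forall>S'. explores V adj h S' \<longrightarrow> cost wt q h S \<le> cost wt q h S')"

definition is_walk :: "('v \<Rightarrow> 'v \<Rightarrow> bool) \<Rightarrow> 'v list \<Rightarrow> bool" where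
  "is_walk adj xs \<longleftrightarrow> xs \<noteq> [] \<and> (\<forall>i < length xs - 1. adj (xs ! i) (xs ! Suc i))"

definition walk_weight :: "('v \<Rightarrow> 'v \<Rightarrow> real) \<Rightarrow> 'v list \<Rightarrow> real" where
  "walk_weight wt xs = (\<Sum>i < length xs - 1. wt (xs ! i) (xs ! Suc i))"

definition gdist :: "('v \<Rightarrow> 'v \<Rightarrow> bool) \<Rightarrow> ('v \<Rightarrow> 'v \<Rightarrow> real) \<Rightarrow> 'v \<Rightarrow> 'v \<Rightarrow> real" where
  "gdist adj wt x y = Inf {walk_weight wt xs | xs. is_walk adj xs \<and> hd xs = x \<and> last xs = y}"

text \<open>The tree has vertex set V, root r, and every non-root vertex v has
  parent par v; the edge {v, par v} has weight w v.\<close>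
definition rooted_tree :: "'v set \<Rightarrow> 'v \<Rightarrow> ('v \<Rightarrow> 'v) \<Rightarrow> bool" where
  "rooted_tree V r par \<longleftrightarrow> finite V \<and> r \<in> V \<and>
     (\<forall>v \<in> V - {r}. par v \<in> V) \<and> (\<forall>v \<in> V. \<exists>n. (par ^^ n) v = r)"

definition tadj :: "'v set \<Rightarrow> 'v \<Rightarrow> ('v \<Rightarrow> 'v) \<Rightarrow> 'v \<Rightarrow> 'v \<Rightarrow> bool" where
  "tadj V r par x y \<longleftrightarrow> x \<in> V \<and> y \<in> V \<and>
     ((x \<noteq> r \<and> par x = y) \<or> (y \<noteq> r \<and> par y = x))"

definition twt :: "'v \<Rightarrow> ('v \<Rightarrow> 'v) \<Rightarrow> ('v \<Rightarrow> real) \<Rightarrow> 'v \<Rightarrow> 'v \<Rightarrow> real" where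
  "twt r par w x y = (if x \<noteq> r \<and> par x = y then w x else w y)"

definition children :: "'v set \<Rightarrow> 'v \<Rightarrow> ('v \<Rightarrow> 'v) \<Rightarrow> 'v \<Rightarrow> 'v set" where
  "children V r par v = {u \<in> V. u \<noteq> r \<and> par u = v}"

definition is_leaf :: "'v set \<Rightarrow> 'v \<Rightarrow> ('v \<Rightarrow> 'v) \<Rightarrow> 'v \<Rightarrow> bool" where
  "is_leaf V r par v \<longleftrightarrow> v \<in> V \<and> v \<noteq> r \<and> children V r par v = {}"

text \<open>Labels: lk v = Lambda_v.k, lul v = Lambda_v.u_l, luc v = Lambda_v.u_c
  (None = null).  The recursive definition leaves only the choice of the
  maximising child open, so we quantify over all labelings satisfying the
  defining equations at every vertex.\<close>
definition valid_labels ::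
  "'v set \<Rightarrow> 'v \<Rightarrow> ('v \<Rightarrow> 'v) \<Rightarrow> ('v \<Rightarrow> real) \<Rightarrow> real \<Rightarrow>
   ('v \<Rightarrow> nat) \<Rightarrow> ('v \<Rightarrow> 'v) \<Rightarrow> ('v \<Rightarrow> 'v option) \<Rightarrow> bool" where
  "valid_labels V r par w q lk lul luc \<longleftrightarrow>
    (\<forall>v \<in> V.
      (is_leaf V r par v \<longrightarrow> lk v = 1 \<and> lul v = v \<and> luc v = None) \<and>
      (\<not> is_leaf V r par v \<longrightarrow>
         lk v = max 1 (\<Sum>u \<in> children V r par v.
                   lk u - (if lk u = 1 \<and>
                              gdist (tadj V r par) (twt r par w) v (lul u)
                                \<le> gdist (tadj V r par) (twt r par w) r v + q
                           then 1 else 0)) \<and>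
         (children V r par v \<noteq> {} \<longrightarrow>
            (\<exists>u \<in> children V r par v. luc v = Some u \<and> lul v = lul u \<and>
               (\<forall>u' \<in> children V r par v.
                  gdist (tadj V r par) (twt r par w) v (lul u')
                    \<le> gdist (tadj V r par) (twt r par w) v (lul u))))))"

text \<open>costexpl v pos S: starting in configuration pos (agents present at v),
  running the construction at v produces the move sequence S.
  cexpl_loop v cs pos S: processing the (remaining) ordered children cs of v.\<close>
inductive costexpl and cexpl_loop
  for V :: "'v set" and r :: 'v and par :: "'v \<Rightarrow> 'v" and w :: "'v \<Rightarrow> real" and q :: real
  and lk :: "'v \<Rightarrow> nat" and lul :: "'v \<Rightarrow> 'v" and luc :: "'v \<Rightarrow> 'v option"
where
  ce_node: "\<lbrakk> distinct cs; set cs = children V r par v;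
             cs \<noteq> [] \<longrightarrow> luc v = Some (last cs);
             cexpl_loop V r par w q lk lul luc v cs pos S \<rbrakk>
           \<Longrightarrow> costexpl V r par w q lk lul luc v pos S"
| ce_nil: "cexpl_loop V r par w q lk lul luc v [] pos []"
| ce_cons: "\<lbrakk> distinct I; length I = lk c;
             \<forall>i \<in> set I. i < length pos \<and> pos ! i = v;
             M = map (\<lambda>i. Move i c) I;
             costexpl V r par w q lk lul luc c (run r pos M) R;
             if Some c \<noteq> luc v \<and>
                gdist (tadj V r par) (twt r par w) v (lul c)
                  \<le> gdist (tadj V r par) (twt r par w) r v + q
             then (\<exists>j n. j < length (run r pos (M @ R)) \<and>
                         run r pos (M @ R) ! j = lul c \<and>
                         (par ^^ n) (lul c) = v \<and> (\<forall>m < n. (par ^^ m) (lul c) \<noteq> v) \<and>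
                         B = map (\<lambda>i. Move j ((par ^^ i) (lul c))) [1..<Suc n])
             else B = [];
             cexpl_loop V r par w q lk lul luc v cs (run r pos (M @ R @ B)) S \<rbrakk>
           \<Longrightarrow> cexpl_loop V r par w q lk lul luc v (c # cs) pos (M @ R @ B @ S)"

end

theory Submission
  imports Defs
begin

(* Lower bound: give the edge from a non-root vertex u to its parent the potential
   w u * (n_u + 2 [u is explored and n_u = 0]), where n_u is the number of agents in the subtree
   of u. Invoking an agent does not change the potential and traversing an edge raises it by at
   most the weight of that edge, so every exploring strategy that ends in the configuration P costs
   at least q |P| + sum_u w u * g (n_u P), where g 0 = 2 and g n = n otherwise.
   Upper bound: by induction on the tree, the cost of CostExpl inside the subtree of v, plus the
   price lk v * (q + d(r, v)) of bringing its agents from the root to v, is at most the analogous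
   bound for every final configuration with an agent below v. At an inner vertex this is an
   exchange argument: a configuration without agents below a child c pays twice for the whole
   subtree of c, which covers the strategy's cost there up to the saving q + d(r, v) - d(v, lul c)
   of sending one agent back from lul c to v; only the child luc v is not covered this way, and its
   deficit is paid by an agent that the configuration keeps below another child or at v itself.
   At the root the two bounds coincide. *)

lemma run_Nil [simp]: "run h pos [] = pos"
  unfolding run_def by simp

lemma run_Cons [simp]: "run h pos (m # ms) = run h (step h pos m) ms"
  unfolding run_def by simp

lemma run_append: "run h pos (xs @ ys) = run h (run h pos xs) ys"
  unfolding run_def by simp

lemma move_cost_append:
  "move_cost wt q h pos (xs @ ys) = move_cost wt q h pos xs + move_cost wt q h (run h pos xs) ys"
proof (induction xs arbitrary: pos)
  case (Cons m xs) then show ?case by (cases m) auto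
qed simp

lemma valid_moves_append:
  "valid_moves adj h pos (xs @ ys) \<longleftrightarrow> valid_moves adj h pos xs \<and> valid_moves adj h (run h pos xs) ys"
proof (induction xs arbitrary: pos)
  case (Cons m xs) then show ?case by (cases m) auto
qed simp

lemma visited_append: "visited h pos (xs @ ys) = visited h pos xs \<union> visited h (run h pos xs) ys"
proof (induction xs arbitrary: pos)
  case Nil then show ?case by (cases ys) auto
qed auto

lemma set_subset_visited: "set pos \<subseteq> visited h pos ms"
  by (cases ms) auto

lemma length_run_ge: "length pos \<le> length (run h pos ms)"
proof (induction ms arbitrary: pos)
  case (Cons m ms)
  have "length pos \<le> length (step h pos m)" by (cases m) auto
  with Cons.IH[of "step h pos m"] show ?case by simp
qed simp

lemma run_nonempty: "visited h pos ms \<noteq> {} \<Longrightarrow> run h pos ms \<noteq> []"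
proof (induction ms arbitrary: pos)
  case (Cons m ms)
  show ?case
  proof (cases "pos = []")
    case True
    with Cons show ?thesis by simp
  next
    case False
    then show ?thesis using length_run_ge[of "step h pos m" h ms] by (cases m) auto
  qed
qed simp

lemma run_move_agents:
  assumes "distinct I" "\<forall>i \<in> set I. i < length pos"
  shows "run h pos (map (\<lambda>i. Move i c) I) = map (\<lambda>k. if k \<in> set I then c else pos ! k) [0..<length pos]"
  using assms
proof (induction I arbitrary: pos)
  case Nil then show ?case by (simp add: map_nth)
next
  case (Cons i I)
  have "run h pos (map (\<lambda>i. Move i c) (i # I)) = run h (pos[i := c]) (map (\<lambda>i. Move i c) I)"
    by simp
  also have "\<dots> = map (\<lambda>k. if k \<in> set I then c else pos[i := c] ! k) [0..<length pos]"
    using Cons by simp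
  also have "\<dots> = map (\<lambda>k. if k \<in> set (i # I) then c else pos ! k) [0..<length pos]"
    by (rule map_cong) (auto simp: nth_list_update)
  finally show ?case .
qed

lemma move_cost_move_agents:
  assumes "distinct I" "\<forall>i \<in> set I. i < length pos \<and> pos ! i = v"
  shows "move_cost wt q h pos (map (\<lambda>i. Move i c) I) = real (length I) * wt v c"
  using assms
proof (induction I arbitrary: pos)
  case (Cons i I)
  then have "\<forall>k \<in> set I. k < length (pos[i := c]) \<and> pos[i := c] ! k = v"
    by (auto simp: nth_list_update)
  with Cons show ?case by (simp add: algebra_simps)
qed simp

lemma valid_moves_move_agents:
  assumes "distinct I" "\<forall>i \<in> set I. i < length pos \<and> pos ! i = v" "adj v c"
  shows "valid_moves adj h pos (map (\<lambda>i. Move i c) I)"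
  using assms
proof (induction I arbitrary: pos)
  case (Cons i I)
  then have "\<forall>k \<in> set I. k < length (pos[i := c]) \<and> pos[i := c] ! k = v"
    by (auto simp: nth_list_update)
  with Cons show ?case by simp
qed simp

lemma run_invokes: "run h pos (replicate k Invoke) = pos @ replicate k h"
  by (induction k arbitrary: pos) (auto simp: replicate_app_Cons_same)

lemma move_cost_invokes: "move_cost wt q h pos (replicate k Invoke) = real k * q"
  by (induction k arbitrary: pos) (auto simp: algebra_simps)

lemma valid_moves_invokes: "valid_moves adj h pos (replicate k Invoke)"
  by (induction k arbitrary: pos) auto

lemma walk_weight_snoc:
  assumes "xs \<noteq> []"
  shows "walk_weight wt (xs @ [y]) = walk_weight wt xs + wt (last xs) y"
proof -
  obtain n where n: "length xs = Suc n" using assms by (cases xs) auto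
  have "walk_weight wt (xs @ [y]) =
      (\<Sum>i < n. wt ((xs @ [y]) ! i) ((xs @ [y]) ! Suc i)) + wt ((xs @ [y]) ! n) ((xs @ [y]) ! Suc n)"
    unfolding walk_weight_def using n by simp
  also have "(\<Sum>i < n. wt ((xs @ [y]) ! i) ((xs @ [y]) ! Suc i)) = walk_weight wt xs"
    unfolding walk_weight_def using n by (auto simp: nth_append intro: sum.cong)
  finally show ?thesis using n assms by (simp add: nth_append last_conv_nth)
qed

lemma is_walk_snoc:
  assumes "xs \<noteq> []"
  shows "is_walk adj (xs @ [y]) \<longleftrightarrow> is_walk adj xs \<and> adj (last xs) y"
proof -
  obtain n where n: "length xs = Suc n" using assms by (cases xs) auto
  have split: "(\<forall>i < Suc n. P i) \<longleftrightarrow> (\<forall>i < n. P i) \<and> P n" for P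
    by (auto simp: less_Suc_eq)
  have "is_walk adj (xs @ [y]) \<longleftrightarrow> (\<forall>i < Suc n. adj ((xs @ [y]) ! i) ((xs @ [y]) ! Suc i))"
    unfolding is_walk_def using n by simp
  also have "\<dots> \<longleftrightarrow> (\<forall>i < n. adj (xs ! i) (xs ! Suc i)) \<and> adj (last xs) y"
    unfolding split using n assms by (simp add: nth_append last_conv_nth)
  finally show ?thesis unfolding is_walk_def using n assms by simp
qed

(* The exchange argument at an inner vertex: C are its children and u0 is luc; ret c says that
   CostExpl sends an agent back from c, which saves \<delta> c; A c and L c are the charges of the strategy
   and of a final configuration at c, vacant c says that the configuration has no agent below c, and
   E is paid for its agents at the vertex itself. *)
lemma sum_exchange_le:
  fixes A L \<delta> :: "'c \<Rightarrow> real"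
  assumes C: "finite C" "u0 \<in> C"
    and ret: "\<And>c. c \<in> C \<Longrightarrow> ret c \<longleftrightarrow> c \<noteq> u0 \<and> 0 \<le> \<delta> c"
    and u0_min: "\<And>c. c \<in> C \<Longrightarrow> \<delta> u0 \<le> \<delta> c"
    and occupied: "\<And>c. c \<in> C \<Longrightarrow> \<not> vacant c \<Longrightarrow> A c \<le> L c"
    and vacant: "\<And>c. c \<in> C \<Longrightarrow> vacant c \<Longrightarrow> A c \<le> L c + \<delta> c"
    and all_vacant: "\<forall>c \<in> C. vacant c \<Longrightarrow> \<delta> u0 \<le> E"
    and E: "0 \<le> E"
  shows "(\<Sum>c \<in> C. A c - (if ret c then \<delta> c else 0)) \<le> (\<Sum>c \<in> C. L c) + E"
proof -
  define B where "B c = A c - (if ret c then \<delta> c else 0)" for c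
  have B_le: "B c \<le> L c + (if c = u0 then if vacant u0 then \<delta> u0 else 0 else 0)" if c: "c \<in> C" for c
    using ret[OF c] occupied[OF c] vacant[OF c] unfolding B_def by (cases "vacant c") auto
  have "(\<Sum>c \<in> C. B c) \<le> (\<Sum>c \<in> C. L c + (if c = u0 then if vacant u0 then \<delta> u0 else 0 else 0))"
    using B_le by (rule sum_mono)
  then have sum_B: "(\<Sum>c \<in> C. B c) \<le> (\<Sum>c \<in> C. L c) + (if vacant u0 then \<delta> u0 else 0)"
    using C by (simp add: sum.distrib)
  show ?thesis
  proof (cases "vacant u0 \<and> 0 < \<delta> u0")
    case False
    then show ?thesis using sum_B E unfolding B_def by (auto split: if_splits)
  next
    case u0: True
    show ?thesis
    proof (cases "\<forall>c \<in> C. vacant c")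
      case True
      then show ?thesis using sum_B all_vacant u0 unfolding B_def by simp
    next
      case False
      then obtain c' where c': "c' \<in> C" "\<not> vacant c'" by blast
      then have "c' \<noteq> u0" "0 < \<delta> c'" using u0 u0_min[OF c'(1)] by auto
      then have "B c' \<le> L c' - \<delta> u0"
        using ret[OF c'(1)] occupied[OF c'] u0_min[OF c'(1)] unfolding B_def by simp
      then have "B c \<le> L c + (if c = u0 then \<delta> u0 else 0) - (if c = c' then \<delta> u0 else 0)" if "c \<in> C" for c
        using B_le[OF that] \<open>c' \<noteq> u0\<close> u0 by auto
      then have "(\<Sum>c \<in> C. B c) \<le> (\<Sum>c \<in> C. L c + (if c = u0 then \<delta> u0 else 0) - (if c = c' then \<delta> u0 else 0))"
        by (rule sum_mono)
      also have "\<dots> = (\<Sum>c \<in> C. L c)"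
        using C c'(1) by (simp add: sum.distrib sum_subtractf)
      finally show ?thesis using E unfolding B_def by simp
    qed
  qed
qed

locale rooted_weighted_tree =
  fixes V :: "'v set" and r :: 'v and par :: "'v \<Rightarrow> 'v" and w :: "'v \<Rightarrow> real"
  assumes rooted_tree: "rooted_tree V r par"
    and weight_pos: "\<And>v. v \<in> V \<Longrightarrow> v \<noteq> r \<Longrightarrow> 0 < w v"
begin

abbreviation adj :: "'v \<Rightarrow> 'v \<Rightarrow> bool" where "adj \<equiv> tadj V r par"
abbreviation wt :: "'v \<Rightarrow> 'v \<Rightarrow> real" where "wt \<equiv> twt r par w"
abbreviation ch :: "'v \<Rightarrow> 'v set" where "ch \<equiv> children V r par"

lemma finite_V: "finite V" and root_in_V: "r \<in> V"
  and parent_in_V: "v \<in> V \<Longrightarrow> v \<noteq> r \<Longrightarrow> par v \<in> V"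
  and reaches_root: "v \<in> V \<Longrightarrow> \<exists>n. (par ^^ n) v = r"
  using rooted_tree unfolding rooted_tree_def by auto

definition level :: "'v \<Rightarrow> nat" where
  "level x = (LEAST n. (par ^^ n) x = r)"

lemma funpow_level: "x \<in> V \<Longrightarrow> (par ^^ level x) x = r"
  unfolding level_def using reaches_root by (meson LeastI_ex)

lemma level_le: "(par ^^ n) x = r \<Longrightarrow> level x \<le> n"
  unfolding level_def by (rule Least_le)

lemma level_eq_0_iff: "x \<in> V \<Longrightarrow> level x = 0 \<longleftrightarrow> x = r"
  using funpow_level level_le[of 0 x] by fastforce

lemma level_root: "level r = 0"
  using level_le[of 0 r] by simp

lemma level_parent:
  assumes "x \<in> V" "x \<noteq> r"
  shows "level x = Suc (level (par x))"
proof -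
  obtain m where m: "level x = Suc m"
    using level_eq_0_iff assms by (cases "level x") auto
  have "(par ^^ m) (par x) = r"
    using funpow_level[OF assms(1)] m by (simp add: funpow_swap1)
  then have "level (par x) \<le> m" by (rule level_le)
  moreover have "(par ^^ Suc (level (par x))) x = r"
    using funpow_level[OF parent_in_V[OF assms]] by (simp add: funpow_swap1)
  then have "level x \<le> Suc (level (par x))" by (rule level_le)
  ultimately show ?thesis using m by simp
qed

lemma ancestor_level:
  "x \<in> V \<Longrightarrow> n \<le> level x \<Longrightarrow> (par ^^ n) x \<in> V \<and> level ((par ^^ n) x) = level x - n"
proof (induction n)
  case (Suc n)
  then have IH: "(par ^^ n) x \<in> V" "level ((par ^^ n) x) = level x - n" by auto
  have "(par ^^ n) x \<noteq> r"
  proof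
    assume "(par ^^ n) x = r"
    with IH(2) Suc.prems show False by (simp add: level_root)
  qed
  then show ?case using parent_in_V level_parent IH Suc.prems by simp
qed simp

lemma ancestor_ne_root: "x \<in> V \<Longrightarrow> n < level x \<Longrightarrow> (par ^^ n) x \<noteq> r"
  using ancestor_level[of x n] level_eq_0_iff by force

lemma level_induct [consumes 1, case_names step]:
  assumes "x \<in> V"
    and "\<And>x. x \<in> V \<Longrightarrow> (\<And>y. y \<in> V \<Longrightarrow> level y < level x \<Longrightarrow> P y) \<Longrightarrow> P x"
  shows "P x"
  using assms(1)
proof (induction "level x" arbitrary: x rule: less_induct)
  case less then show ?case using assms(2) by blast
qed

definition descendant :: "'v \<Rightarrow> 'v \<Rightarrow> bool" where
  "descendant x v \<longleftrightarrow> x \<in> V \<and> (\<exists>n \<le> level x. (par ^^ n) x = v)"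

lemma descendant_in_V: "descendant x v \<Longrightarrow> x \<in> V \<and> v \<in> V"
  unfolding descendant_def using ancestor_level by blast

lemma descendant_level:
  "descendant x v \<Longrightarrow> (par ^^ n) x = v \<Longrightarrow> n \<le> level x \<Longrightarrow> level v = level x - n"
  using ancestor_level descendant_in_V by blast

lemma descendant_level_le: "descendant x v \<Longrightarrow> level v \<le> level x"
  unfolding descendant_def using ancestor_level by fastforce

lemma descendant_refl: "x \<in> V \<Longrightarrow> descendant x x"
  unfolding descendant_def by (intro conjI exI[of _ 0]) simp_all

lemma descendant_root: "x \<in> V \<Longrightarrow> descendant x r"
  unfolding descendant_def using funpow_level by blast

lemma descendant_parent_iff:
  assumes "x \<in> V" "x \<noteq> r"
  shows "descendant x v \<longleftrightarrow> x = v \<or> descendant (par x) v"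
proof
  assume "descendant x v"
  then obtain n where n: "n \<le> level x" "(par ^^ n) x = v"
    unfolding descendant_def by auto
  show "x = v \<or> descendant (par x) v"
  proof (cases n)
    case (Suc m)
    then have "(par ^^ m) (par x) = v" "m \<le> level (par x)"
      using n level_parent[OF assms] by (simp_all add: funpow_swap1)
    then show ?thesis unfolding descendant_def using parent_in_V[OF assms] by blast
  qed (use n in simp)
next
  assume "x = v \<or> descendant (par x) v"
  then show "descendant x v"
  proof
    assume "descendant (par x) v"
    then obtain n where "n \<le> level (par x)" "(par ^^ n) (par x) = v"
      unfolding descendant_def by auto
    then have "(par ^^ Suc n) x = v" "Suc n \<le> level x"
      using level_parent[OF assms] by (simp_all add: funpow_swap1)
    then show ?thesis unfolding descendant_def using assms by blast
  qed (use descendant_refl assms in simp)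
qed

lemma descendant_trans: "descendant x u \<Longrightarrow> descendant u v \<Longrightarrow> descendant x v"
proof -
  assume xu: "descendant x u" and uv: "descendant u v"
  obtain a where a: "a \<le> level x" "(par ^^ a) x = u" using xu unfolding descendant_def by auto
  obtain b where b: "b \<le> level u" "(par ^^ b) u = v" using uv unfolding descendant_def by auto
  have "level u = level x - a" using descendant_level[OF xu a(2,1)] .
  then have "(par ^^ (b + a)) x = v" "b + a \<le> level x" using a b by (simp_all add: funpow_add)
  then show ?thesis using descendant_in_V[OF xu] unfolding descendant_def by blast
qed

lemma descendant_antisym: "descendant x v \<Longrightarrow> descendant v x \<Longrightarrow> x = v"
proof -
  assume xv: "descendant x v" and vx: "descendant v x"
  obtain a where a: "a \<le> level x" "(par ^^ a) x = v" using xv unfolding descendant_def by auto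
  have "level v = level x - a" using descendant_level[OF xv a(2,1)] .
  with descendant_level_le[OF vx] a have "a = 0" by simp
  then show ?thesis using a by simp
qed

lemma descendant_of_root: "descendant r v \<Longrightarrow> v = r"
  using descendant_antisym descendant_root descendant_in_V by blast

lemma descendant_same_level:
  assumes "descendant x c1" "descendant x c2" "level c1 = level c2"
  shows "c1 = c2"
proof -
  obtain a where a: "a \<le> level x" "(par ^^ a) x = c1" using assms(1) unfolding descendant_def by auto
  obtain b where b: "b \<le> level x" "(par ^^ b) x = c2" using assms(2) unfolding descendant_def by auto
  have "level c1 = level x - a" "level c2 = level x - b" using descendant_level assms a b by auto
  then have "a = b" using a b assms(3) by simp
  then show ?thesis using a b by simp
qed

lemma mem_children_iff: "c \<in> ch v \<longleftrightarrow> c \<in> V \<and> c \<noteq> r \<and> par c = v"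
  unfolding children_def by auto

lemma finite_children: "finite (ch v)"
  using finite_V unfolding children_def by auto

lemma child_descendant:
  assumes "c \<in> ch v"
  shows "descendant c v \<and> c \<noteq> v \<and> level c = Suc (level v) \<and> v \<in> V"
proof -
  have c: "c \<in> V" "c \<noteq> r" "par c = v" using assms mem_children_iff by auto
  then have "descendant c v"
    using descendant_parent_iff[OF c(1,2)] descendant_refl parent_in_V[OF c(1,2)] by blast
  then show ?thesis using c level_parent parent_in_V by force
qed

lemma descendant_child_ex:
  assumes "descendant x v" "x \<noteq> v"
  shows "\<exists>c \<in> ch v. descendant x c"
proof -
  obtain n where n: "n \<le> level x" "(par ^^ n) x = v"
    using assms(1) unfolding descendant_def by auto
  have x: "x \<in> V" using descendant_in_V assms by auto
  obtain m where m: "n = Suc m" using n assms(2) by (cases n) auto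
  have "(par ^^ m) x \<in> ch v"
    using ancestor_level[OF x] ancestor_ne_root[OF x] n m mem_children_iff by simp
  moreover have "descendant x ((par ^^ m) x)"
    unfolding descendant_def using x n m by (intro conjI exI[of _ m]) auto
  ultimately show ?thesis by blast
qed

lemma child_unique: "c1 \<in> ch v \<Longrightarrow> c2 \<in> ch v \<Longrightarrow> descendant x c1 \<Longrightarrow> descendant x c2 \<Longrightarrow> c1 = c2"
  using child_descendant descendant_same_level by metis

lemma not_descendant_child: "c \<in> ch v \<Longrightarrow> \<not> descendant v c"
  using child_descendant descendant_antisym by metis

definition subtree :: "'v \<Rightarrow> 'v set" where
  "subtree v = {x. descendant x v}"

lemma finite_subtree: "finite (subtree v)"
  using finite_V descendant_in_V unfolding subtree_def by (metis mem_Collect_eq rev_finite_subset subsetI)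

lemma self_in_subtree: "v \<in> V \<Longrightarrow> v \<in> subtree v"
  unfolding subtree_def using descendant_refl by simp

lemma subtree_remove_self: "v \<in> V \<Longrightarrow> subtree v - {v} = (\<Union>c \<in> ch v. subtree c)"
  using descendant_child_ex child_descendant descendant_trans not_descendant_child
  unfolding subtree_def by (auto, metis)

lemma disjoint_subtrees: "c1 \<in> ch v \<Longrightarrow> c2 \<in> ch v \<Longrightarrow> c1 \<noteq> c2 \<Longrightarrow> subtree c1 \<inter> subtree c2 = {}"
  unfolding subtree_def using child_unique by auto

lemma subtree_root: "subtree r = V"
  unfolding subtree_def using descendant_root descendant_in_V by auto

lemma subtree_induct [consumes 1, case_names step]:
  assumes "x \<in> V" and "\<And>x. x \<in> V \<Longrightarrow> (\<And>c. c \<in> ch x \<Longrightarrow> P c) \<Longrightarrow> P x"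
  shows "P x"
  using assms(1)
proof (induction "card (subtree x)" arbitrary: x rule: less_induct)
  case less
  show ?case
  proof (rule assms(2)[OF less.prems])
    fix c assume c: "c \<in> ch x"
    have "subtree c \<subseteq> subtree x"
      using child_descendant[OF c] descendant_trans unfolding subtree_def by blast
    moreover have "x \<notin> subtree c"
      using not_descendant_child[OF c] unfolding subtree_def by blast
    ultimately have "subtree c \<subset> subtree x"
      using self_in_subtree[OF less.prems] by blast
    then have "card (subtree c) < card (subtree x)" using finite_subtree psubset_card_mono by blast
    then show "P c" using less.hyps c mem_children_iff by blast
  qed
qed

definition depth :: "'v \<Rightarrow> real" where
  "depth x = (\<Sum>i < level x. w ((par ^^ i) x))"

lemma depth_root: "depth r = 0"
  unfolding depth_def level_root by simp

lemma depth_parent: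
  assumes "x \<in> V" "x \<noteq> r"
  shows "depth x = w x + depth (par x)"
  unfolding depth_def level_parent[OF assms] sum.lessThan_Suc_shift by (simp add: funpow_swap1)

lemma depth_mono:
  assumes "descendant x v"
  shows "depth v \<le> depth x"
proof -
  have "x \<in> V" using descendant_in_V assms by blast
  then show ?thesis using assms
  proof (induction x rule: level_induct)
    case (step x)
    show ?case
    proof (cases "x = v")
      case False
      then have "x \<noteq> r" using step.prems descendant_of_root by auto
      then have "descendant (par x) v"
        using descendant_parent_iff step.hyps step.prems False by blast
      then show ?thesis using step depth_parent weight_pos parent_in_V level_parent \<open>x \<noteq> r\<close>
        by fastforce
    qed simp
  qed
qed

lemma depth_nonneg: "x \<in> V \<Longrightarrow> 0 \<le> depth x"
  using depth_mono[OF descendant_root] depth_root by simp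

lemma sum_weights_path:
  assumes "descendant x c"
  shows "(\<Sum>u | descendant x u \<and> descendant u c \<and> u \<noteq> c. w u) = depth x - depth c"
proof -
  have "x \<in> V" using descendant_in_V assms by blast
  then show ?thesis using assms
  proof (induction x rule: level_induct)
    case (step x)
    show ?case
    proof (cases "x = c")
      case True
      have no_path: "{u. descendant c u \<and> descendant u c \<and> u \<noteq> c} = {}"
        using descendant_antisym by blast
      show ?thesis using True by (simp add: no_path)
    next
      case False
      then have x: "x \<noteq> r" using step.prems descendant_of_root by auto
      let ?above = "{u. descendant (par x) u \<and> descendant u c \<and> u \<noteq> c}"
      have "descendant (par x) c"
        using descendant_parent_iff step.hyps step.prems False x by blast
      then have IH: "sum w ?above = depth (par x) - depth c"
        using step.IH parent_in_V[OF step.hyps x] level_parent[OF step.hyps x] by simp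
      have "{u. descendant x u \<and> descendant u c \<and> u \<noteq> c} = insert x ?above"
        using descendant_parent_iff[OF step.hyps x] False step.prems by auto
      moreover have "x \<notin> ?above"
        using descendant_level_le level_parent[OF step.hyps x] by fastforce
      moreover have "finite ?above"
        using finite_subtree unfolding subtree_def by (rule rev_finite_subset) auto
      ultimately show ?thesis using IH depth_parent[OF step.hyps x] by simp
    qed
  qed
qed

lemma adj_cases:
  assumes "adj x y"
  shows "x \<in> V \<and> y \<in> V \<and>
    ((x \<noteq> r \<and> par x = y \<and> wt x y = w x \<and> depth x = w x + depth y) \<or>
     (y \<noteq> r \<and> par y = x \<and> wt x y = w y \<and> depth y = w y + depth x))"
proof -
  have V: "x \<in> V" "y \<in> V" using assms unfolding tadj_def by auto
  show ?thesis
  proof (cases "x \<noteq> r \<and> par x = y")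
    case True
    then show ?thesis using V depth_parent[OF V(1)] unfolding twt_def by simp
  next
    case False
    then have "y \<noteq> r" "par y = x" using assms unfolding tadj_def by auto
    then show ?thesis using False V depth_parent[OF V(2)] unfolding twt_def by auto
  qed
qed

lemma wt_eq_depth_diff:
  assumes "adj x y"
  shows "wt x y = \<bar>depth x - depth y\<bar>"
  using adj_cases[OF assms] by (auto simp: abs_of_pos weight_pos)

lemma wt_child:
  assumes "c \<in> ch v"
  shows "wt v c = w c"
proof -
  have c: "c \<in> V" "c \<noteq> r" "par c = v" using assms mem_children_iff by auto
  then have "adj v c" unfolding tadj_def using parent_in_V by auto
  then show ?thesis using wt_eq_depth_diff depth_parent[OF c(1,2)] weight_pos[OF c(1,2)] c(3) by simp
qed

lemma walk_weight_ge: "is_walk adj xs \<Longrightarrow> \<bar>depth (last xs) - depth (hd xs)\<bar> \<le> walk_weight wt xs"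
proof (induction xs rule: rev_induct)
  case (snoc y xs)
  show ?case
  proof (cases "xs = []")
    case True then show ?thesis unfolding walk_weight_def by simp
  next
    case False
    have "is_walk adj xs" "adj (last xs) y" using is_walk_snoc[OF False] snoc.prems by auto
    then show ?thesis
      using snoc.IH walk_weight_snoc[OF False] wt_eq_depth_diff False by auto
  qed
qed (simp add: is_walk_def)

lemma walk_to_descendant:
  assumes "descendant x v"
  shows "\<exists>xs. is_walk adj xs \<and> hd xs = v \<and> last xs = x \<and> walk_weight wt xs = depth x - depth v"
proof -
  have "x \<in> V" using descendant_in_V assms by blast
  then show ?thesis using assms
  proof (induction x rule: level_induct)
    case (step x)
    show ?case
    proof (cases "x = v")
      case True
      then show ?thesis by (intro exI[of _ "[x]"]) (auto simp: is_walk_def walk_weight_def)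
    next
      case False
      then have x: "x \<noteq> r" using step.prems descendant_of_root by auto
      have "descendant (par x) v"
        using descendant_parent_iff step.hyps step.prems False x by blast
      then obtain xs where xs: "is_walk adj xs" "hd xs = v" "last xs = par x"
          "walk_weight wt xs = depth (par x) - depth v"
        using step.IH parent_in_V[OF step.hyps x] level_parent[OF step.hyps x] by auto
      have ne: "xs \<noteq> []" using xs(1) unfolding is_walk_def by auto
      have "x \<in> ch (par x)" using step.hyps x mem_children_iff by simp
      then have a: "adj (par x) x" "wt (par x) x = w x"
        using wt_child step.hyps parent_in_V x unfolding tadj_def by auto
      show ?thesis using xs ne a is_walk_snoc[OF ne] walk_weight_snoc[OF ne] depth_parent[OF step.hyps x]
        by (intro exI[of _ "xs @ [x]"]) auto
    qed
  qed
qed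

lemma gdist_descendant:
  assumes "descendant x v"
  shows "gdist adj wt v x = depth x - depth v"
  unfolding gdist_def
proof (rule cInf_eq_minimum)
  obtain xs where "is_walk adj xs" "hd xs = v" "last xs = x" "walk_weight wt xs = depth x - depth v"
    using walk_to_descendant assms by blast
  then show "depth x - depth v \<in> {walk_weight wt xs |xs. is_walk adj xs \<and> hd xs = v \<and> last xs = x}"
    by (metis (mono_tags, lifting) mem_Collect_eq)
next
  fix d assume "d \<in> {walk_weight wt xs |xs. is_walk adj xs \<and> hd xs = v \<and> last xs = x}"
  then obtain xs where "d = walk_weight wt xs" "is_walk adj xs" "hd xs = v" "last xs = x" by blast
  then show "depth x - depth v \<le> d" using walk_weight_ge[of xs] by simp
qed

lemma gdist_root: "x \<in> V \<Longrightarrow> gdist adj wt r x = depth x"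
  using gdist_descendant[OF descendant_root] depth_root by simp

definition climb :: "nat \<Rightarrow> 'v \<Rightarrow> nat \<Rightarrow> 'v move list" where
  "climb j x n = map (\<lambda>i. Move j ((par ^^ i) x)) [1..<Suc n]"

lemma climb_Suc: "climb j x (Suc n) = climb j x n @ [Move j ((par ^^ Suc n) x)]"
  unfolding climb_def by simp

lemma run_climb:
  "j < length pos \<Longrightarrow> run r pos (climb j x n) = (if n = 0 then pos else pos[j := (par ^^ n) x])"
proof (induction n)
  case (Suc n) then show ?case unfolding climb_Suc run_append by auto
qed (simp add: climb_def)

lemma move_cost_valid_climb:
  assumes "j < length pos" "pos ! j = x" "x \<in> V" "n \<le> level x"
  shows "move_cost wt q r pos (climb j x n) = depth x - depth ((par ^^ n) x) \<and>
    valid_moves adj r pos (climb j x n)"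
  using assms(4)
proof (induction n)
  case (Suc n)
  let ?y = "(par ^^ n) x"
  have y: "?y \<in> V" "?y \<noteq> r"
    using ancestor_level[OF assms(3)] ancestor_ne_root[OF assms(3)] Suc.prems by auto
  have "run r pos (climb j x n) ! j = ?y" "j < length (run r pos (climb j x n))"
    using run_climb assms(1,2) by auto
  moreover have "adj ?y (par ?y)" "wt ?y (par ?y) = w ?y"
    unfolding tadj_def twt_def using y parent_in_V by auto
  ultimately show ?case
    using Suc depth_parent[OF y]
    by (simp add: climb_Suc move_cost_append valid_moves_append)
qed (simp add: climb_def)

definition agents_below :: "'v \<Rightarrow> 'v list \<Rightarrow> nat" where
  "agents_below u P = (\<Sum>i < length P. if descendant (P ! i) u then 1 else 0)"

lemma agents_below_update:
  assumes "i < length P"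
  shows "agents_below u (P[i := y]) + (if descendant (P ! i) u then 1 else 0) =
    agents_below u P + (if descendant y u then 1 else 0)"
proof -
  let ?f = "\<lambda>Q k. if descendant (Q ! k) u then 1 else (0::nat)"
  have i: "i \<in> {..<length P}" using assms by simp
  have "agents_below u (P[i := y]) = ?f (P[i := y]) i + (\<Sum>k \<in> {..<length P} - {i}. ?f (P[i := y]) k)"
    unfolding agents_below_def using sum.remove[OF finite_lessThan i, of "?f (P[i := y])"] by simp
  moreover have "agents_below u P = ?f P i + (\<Sum>k \<in> {..<length P} - {i}. ?f P k)"
    unfolding agents_below_def using sum.remove[OF finite_lessThan i, of "?f P"] by simp
  moreover have "(\<Sum>k \<in> {..<length P} - {i}. ?f (P[i := y]) k) = (\<Sum>k \<in> {..<length P} - {i}. ?f P k)"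
    by (rule sum.cong) auto
  ultimately show ?thesis using assms by simp
qed

lemma agents_below_snoc: "agents_below u (P @ [x]) = agents_below u P + (if descendant x u then 1 else 0)"
  unfolding agents_below_def by (simp add: nth_append)

lemma agents_below_single: "agents_below u [x] = (if descendant x u then 1 else 0)"
  unfolding agents_below_def by simp

lemma agents_below_pos: "i < length P \<Longrightarrow> descendant (P ! i) u \<Longrightarrow> 1 \<le> agents_below u P"
  unfolding agents_below_def
  using member_le_sum[of i "{..<length P}" "\<lambda>k. if descendant (P ! k) u then 1 else (0::nat)"]
  by simp

lemma agents_below_root: "set P \<subseteq> V \<Longrightarrow> agents_below r P = length P"
  unfolding agents_below_def using descendant_root nth_mem by (simp add: subset_iff)

lemma agents_below_mono: "descendant u c \<Longrightarrow> agents_below u P \<le> agents_below c P"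
  unfolding agents_below_def by (rule sum_mono) (use descendant_trans in auto)

lemma sum_agents_below_children:
  assumes "v \<in> V"
  shows "(\<Sum>c \<in> ch v. agents_below c P) \<le> agents_below v P"
proof -
  have "(\<Sum>c \<in> ch v. agents_below c P) = (\<Sum>i < length P. \<Sum>c \<in> ch v. if descendant (P ! i) c then 1 else 0)"
    unfolding agents_below_def by (rule sum.swap)
  also have "\<dots> \<le> (\<Sum>i < length P. if descendant (P ! i) v then 1 else 0)"
  proof (rule sum_mono)
    fix i
    show "(\<Sum>c \<in> ch v. if descendant (P ! i) c then 1 else 0) \<le> (if descendant (P ! i) v then 1 else (0::nat))"
    proof (cases "\<exists>c \<in> ch v. descendant (P ! i) c")
      case True
      then obtain c0 where c0: "c0 \<in> ch v" "descendant (P ! i) c0" by blast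
      have "(\<Sum>c \<in> ch v. if descendant (P ! i) c then 1 else (0::nat)) = (\<Sum>c \<in> ch v. if c = c0 then 1 else 0)"
        by (rule sum.cong) (use c0 child_unique in auto)
      then show ?thesis using c0 finite_children child_descendant descendant_trans by auto
    qed simp
  qed
  finally show ?thesis unfolding agents_below_def .
qed

(* The least number of traversals of an explored edge with n agents below it at the end. *)
definition traversals :: "nat \<Rightarrow> real" where
  "traversals n = (if n = 0 then 2 else real n)"

definition edge_potential :: "'v set \<Rightarrow> 'v list \<Rightarrow> 'v \<Rightarrow> real" where
  "edge_potential Vis P u = real (agents_below u P) + (if u \<in> Vis \<and> agents_below u P = 0 then 2 else 0)"

definition potential :: "'v set \<Rightarrow> 'v list \<Rightarrow> real" where
  "potential Vis P = (\<Sum>u \<in> V - {r}. w u * edge_potential Vis P u)"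

definition subtree_potential :: "'v \<Rightarrow> 'v list \<Rightarrow> real" where
  "subtree_potential v P = (\<Sum>u \<in> subtree v - {v}. w u * traversals (agents_below u P))"

lemma potential_empty: "potential {} [] = 0"
  unfolding potential_def edge_potential_def agents_below_def by simp

lemma potential_explored: "V \<subseteq> Vis \<Longrightarrow> potential Vis P = subtree_potential r P"
  unfolding potential_def edge_potential_def subtree_potential_def subtree_root traversals_def
  by (intro sum.cong) auto

lemma potential_invoke: "potential (insert r Vis) (P @ [r]) = potential Vis P"
  unfolding potential_def edge_potential_def agents_below_snoc
  using descendant_of_root by (intro sum.cong) auto

lemma potential_le_add_weight:
  assumes e: "e \<in> V - {r}"
    and others: "\<And>u. u \<in> V - {r} \<Longrightarrow> u \<noteq> e \<Longrightarrow> edge_potential Vis' P' u \<le> edge_potential Vis P u"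
    and at_e: "edge_potential Vis' P' e \<le> edge_potential Vis P e + 1"
  shows "potential Vis' P' \<le> potential Vis P + w e"
proof -
  have "potential Vis' P' - potential Vis P =
      (\<Sum>u \<in> V - {r}. w u * (edge_potential Vis' P' u - edge_potential Vis P u))"
    unfolding potential_def by (simp add: sum_subtractf right_diff_distrib)
  also have "\<dots> \<le> (\<Sum>u \<in> V - {r}. if u = e then w u else 0)"
  proof (rule sum_mono)
    fix u assume u: "u \<in> V - {r}"
    then have "0 \<le> w u" using weight_pos less_imp_le by blast
    then show "w u * (edge_potential Vis' P' u - edge_potential Vis P u) \<le> (if u = e then w u else 0)"
      using others[OF u] at_e by (auto simp: mult_left_le mult_nonneg_nonpos)
  qed
  also have "\<dots> = w e" using e finite_V by (simp add: sum.delta)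
  finally show ?thesis by simp
qed

lemma potential_move_up:
  assumes i: "i < length P" and x: "P ! i \<in> V" "P ! i \<noteq> r" and explored: "P ! i \<in> Vis"
  shows "potential (insert (par (P ! i)) Vis) (P[i := par (P ! i)]) \<le> potential Vis P + w (P ! i)"
proof (rule potential_le_add_weight)
  let ?x = "P ! i" and ?y = "par (P ! i)"
  have below: "descendant ?x u \<longleftrightarrow> ?x = u \<or> descendant ?y u" for u
    using descendant_parent_iff[OF x] .
  have moved: "agents_below u (P[i := ?y]) + (if descendant ?x u then 1 else 0) =
      agents_below u P + (if descendant ?y u then 1 else 0)" for u
    using agents_below_update[OF i] .
  have "1 \<le> agents_below ?y P"
    using agents_below_pos[OF i] below descendant_refl parent_in_V[OF x] by blast
  then show "edge_potential (insert ?y Vis) (P[i := ?y]) u \<le> edge_potential Vis P u"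
    if "u \<in> V - {r}" "u \<noteq> ?x" for u
    unfolding edge_potential_def using moved[of u] below[of u] that by auto
  have "\<not> descendant ?y ?x" using descendant_level_le level_parent[OF x] by fastforce
  then have "agents_below ?x (P[i := ?y]) + 1 = agents_below ?x P"
    using moved[of ?x] descendant_refl x by simp
  then show "edge_potential (insert ?y Vis) (P[i := ?y]) ?x \<le> edge_potential Vis P ?x + 1"
    unfolding edge_potential_def using explored by auto
qed (use x in simp)

lemma potential_move_down:
  assumes i: "i < length P" and y: "y \<in> V" "y \<noteq> r" "par y = P ! i"
  shows "potential (insert y Vis) (P[i := y]) \<le> potential Vis P + w y"
proof (rule potential_le_add_weight)
  let ?x = "P ! i"
  have below: "descendant y u \<longleftrightarrow> y = u \<or> descendant ?x u" for u
    using descendant_parent_iff[OF y(1,2)] y(3) by simp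
  have moved: "agents_below u (P[i := y]) + (if descendant ?x u then 1 else 0) =
      agents_below u P + (if descendant y u then 1 else 0)" for u
    using agents_below_update[OF i] .
  show "edge_potential (insert y Vis) (P[i := y]) u \<le> edge_potential Vis P u"
    if "u \<in> V - {r}" "u \<noteq> y" for u
    unfolding edge_potential_def using moved[of u] below[of u] that by auto
  have "\<not> descendant ?x y" using descendant_level_le level_parent[OF y(1,2)] y(3) by fastforce
  then have "agents_below y (P[i := y]) = agents_below y P + 1"
    using moved[of y] descendant_refl y by simp
  then show "edge_potential (insert y Vis) (P[i := y]) y \<le> edge_potential Vis P y + 1"
    unfolding edge_potential_def by simp
qed (use y in simp)

lemma potential_move:
  assumes i: "i < length P" and explored: "set P \<subseteq> Vis" and a: "adj (P ! i) y"
  shows "potential (insert y Vis) (P[i := y]) \<le> potential Vis P + wt (P ! i) y"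
  using adj_cases[OF a]
proof (elim conjE disjE)
  assume "P ! i \<in> V" "P ! i \<noteq> r" "par (P ! i) = y" "wt (P ! i) y = w (P ! i)"
  moreover have "P ! i \<in> Vis" using i explored nth_mem by blast
  ultimately show ?thesis using potential_move_up[OF i] by auto
next
  assume "y \<in> V" "y \<noteq> r" "par y = P ! i" "wt (P ! i) y = w y"
  then show ?thesis using potential_move_down[OF i] by simp
qed

lemma set_run_subset_V: "valid_moves adj r pos ms \<Longrightarrow> set pos \<subseteq> V \<Longrightarrow> set (run r pos ms) \<subseteq> V"
proof (induction ms arbitrary: pos)
  case (Cons m ms)
  show ?case
  proof (cases m)
    case Invoke
    then show ?thesis using Cons root_in_V by simp
  next
    case (Move i y)
    then have "y \<in> V" using Cons.prems adj_cases by auto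
    then have "set (pos[i := y]) \<subseteq> V" using Cons.prems by (meson set_update_subsetI)
    then show ?thesis using Cons Move by simp
  qed
qed simp

lemma potential_step:
  assumes valid: "valid_moves adj r pos [m]" and explored: "set pos \<subseteq> Vis"
  shows "q * (real (length (step r pos m)) - real (length pos)) +
      potential (Vis \<union> set (step r pos m)) (step r pos m) \<le> move_cost wt q r pos [m] + potential Vis pos"
proof (cases m)
  case Invoke
  then have "step r pos m = pos @ [r]" "move_cost wt q r pos [m] = q" by simp_all
  moreover have "Vis \<union> set (pos @ [r]) = insert r Vis" using explored by auto
  ultimately show ?thesis using potential_invoke[of Vis pos] by simp
next
  case (Move i y)
  then have i: "i < length pos" and a: "adj (pos ! i) y" using valid by auto
  have "step r pos m = pos[i := y]" "move_cost wt q r pos [m] = wt (pos ! i) y" using Move by simp_all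
  moreover have "Vis \<union> set (pos[i := y]) = insert y Vis"
    using explored i set_update_subset_insert[of pos i y] by (auto simp: set_update_memI)
  ultimately show ?thesis using potential_move[OF i explored a] by simp
qed

lemma potential_run:
  "valid_moves adj r pos ms \<Longrightarrow> set pos \<subseteq> Vis \<Longrightarrow>
   q * (real (length (run r pos ms)) - real (length pos)) + potential (Vis \<union> visited r pos ms) (run r pos ms)
     \<le> move_cost wt q r pos ms + potential Vis pos"
proof (induction ms arbitrary: pos Vis)
  case Nil
  then have "Vis \<union> set pos = Vis" by auto
  then show ?case by simp
next
  case (Cons m ms)
  let ?p = "step r pos m" and ?Vis = "Vis \<union> set (step r pos m)"
  have valid: "valid_moves adj r pos [m]" "valid_moves adj r ?p ms"
    using Cons.prems(1) valid_moves_append[of adj r pos "[m]" ms] by auto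
  have visited_eq: "Vis \<union> visited r pos (m # ms) = ?Vis \<union> visited r ?p ms"
    using Cons.prems(2) set_subset_visited[of ?p r ms] by auto
  have cost_eq: "move_cost wt q r pos (m # ms) = move_cost wt q r pos [m] + move_cost wt q r ?p ms"
    using move_cost_append[of wt q r pos "[m]" ms] by simp
  have "q * (real (length (run r ?p ms)) - real (length ?p)) + potential (?Vis \<union> visited r ?p ms) (run r ?p ms)
      \<le> move_cost wt q r ?p ms + potential ?Vis ?p"
    using Cons.IH[OF valid(2), of ?Vis] by blast
  moreover have "q * (real (length ?p) - real (length pos)) + potential ?Vis ?p
      \<le> move_cost wt q r pos [m] + potential Vis pos"
    using potential_step[OF valid(1) Cons.prems(2)] .
  ultimately show ?case
    unfolding visited_eq cost_eq run_Cons right_diff_distrib by linarith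
qed

lemma explores_cost_ge:
  assumes "explores V adj r S"
  shows "run r [] S \<noteq> [] \<and> set (run r [] S) \<subseteq> V \<and>
    q * real (length (run r [] S)) + subtree_potential r (run r [] S) \<le> cost wt q r S"
proof -
  have valid: "valid_moves adj r [] S" and explored: "V \<subseteq> visited r [] S"
    using assms unfolding explores_def by auto
  have "q * real (length (run r [] S)) + potential (visited r [] S) (run r [] S) \<le> cost wt q r S"
    using potential_run[OF valid, where Vis = "{}" and q = q] potential_empty unfolding cost_def by simp
  moreover have "potential (visited r [] S) (run r [] S) = subtree_potential r (run r [] S)"
    using potential_explored[OF explored] .
  moreover have "run r [] S \<noteq> []" by (rule run_nonempty) (use explored root_in_V in auto)
  ultimately show ?thesis using set_run_subset_V[OF valid] by simp
qed

definition subtree_weight :: "'v \<Rightarrow> real" where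
  "subtree_weight v = (\<Sum>u \<in> subtree v - {v}. w u)"

lemma subtree_potential_children:
  assumes "v \<in> V"
  shows "subtree_potential v P = (\<Sum>c \<in> ch v. w c * traversals (agents_below c P) + subtree_potential c P)"
proof -
  let ?f = "\<lambda>u. w u * traversals (agents_below u P)"
  have "subtree_potential v P = (\<Sum>c \<in> ch v. sum ?f (subtree c))"
    unfolding subtree_potential_def subtree_remove_self[OF assms]
    by (rule sum.UNION_disjoint) (auto simp: finite_children finite_subtree dest: disjoint_subtrees)
  also have "\<dots> = (\<Sum>c \<in> ch v. ?f c + subtree_potential c P)"
    unfolding subtree_potential_def
    using sum.remove[OF finite_subtree self_in_subtree] mem_children_iff by (intro sum.cong) auto
  finally show ?thesis .
qed

lemma subtree_potential_no_agents:
  assumes "agents_below c P = 0"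
  shows "subtree_potential c P = 2 * subtree_weight c"
proof -
  have "subtree_potential c P = (\<Sum>u \<in> subtree c - {c}. 2 * w u)"
    unfolding subtree_potential_def subtree_def traversals_def
    using agents_below_mono[of _ c P] assms by (intro sum.cong) auto
  then show ?thesis unfolding subtree_weight_def sum_distrib_left .
qed

lemma subtree_potential_nonneg: "0 \<le> subtree_potential c P"
  unfolding subtree_potential_def
proof (rule sum_nonneg)
  fix u assume "u \<in> subtree c - {c}"
  then have "u \<in> V" "u \<noteq> r"
    unfolding subtree_def using descendant_in_V descendant_of_root by blast+
  then show "0 \<le> w u * traversals (agents_below u P)"
    using weight_pos[of u] unfolding traversals_def by simp
qed

lemma subtree_potential_single:
  assumes "descendant x c"
  shows "subtree_potential c [x] = 2 * subtree_weight c - (depth x - depth c)"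
proof -
  have "subtree_potential c [x] = (\<Sum>u \<in> subtree c - {c}. 2 * w u - (if descendant x u then w u else 0))"
    unfolding subtree_potential_def agents_below_single traversals_def by (rule sum.cong) auto
  also have "\<dots> = 2 * subtree_weight c - (\<Sum>u \<in> subtree c - {c}. if descendant x u then w u else 0)"
    unfolding subtree_weight_def sum_distrib_left by (rule sum_subtractf)
  also have "(\<Sum>u \<in> subtree c - {c}. if descendant x u then w u else 0) =
      (\<Sum>u \<in> {u \<in> subtree c - {c}. descendant x u}. w u)"
    by (rule sum.inter_filter[symmetric]) (simp add: finite_subtree)
  also have "{u \<in> subtree c - {c}. descendant x u} = {u. descendant x u \<and> descendant u c \<and> u \<noteq> c}"
    unfolding subtree_def by auto
  finally show ?thesis using sum_weights_path[OF assms] by simp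
qed

end

locale costexpl_labels = rooted_weighted_tree V r par w
  for V :: "'v set" and r :: 'v and par :: "'v \<Rightarrow> 'v" and w :: "'v \<Rightarrow> real" +
  fixes q :: real and lk :: "'v \<Rightarrow> nat" and lul :: "'v \<Rightarrow> 'v" and luc :: "'v \<Rightarrow> 'v option"
  assumes q_nonneg: "0 \<le> q"
    and labels: "valid_labels V r par w q lk lul luc"
begin

lemma leaf_labels: "v \<in> V \<Longrightarrow> v \<noteq> r \<Longrightarrow> ch v = {} \<Longrightarrow> lk v = 1 \<and> lul v = v \<and> luc v = None"
  using labels unfolding valid_labels_def is_leaf_def by blast

lemma descendant_lul: "c \<in> ch v \<Longrightarrow> descendant (lul c) c \<and> descendant (lul c) v"
proof -
  have "descendant (lul x) x" if "x \<in> V" "x \<noteq> r" for x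
    using that
  proof (induction x rule: subtree_induct)
    case (step x)
    show ?case
    proof (cases "ch x = {}")
      case True
      then show ?thesis using leaf_labels step descendant_refl by simp
    next
      case False
      then obtain u where u: "u \<in> ch x" "lul x = lul u"
        using labels step.hyps unfolding valid_labels_def is_leaf_def by blast
      then show ?thesis using step.IH[OF u(1)] mem_children_iff child_descendant descendant_trans by metis
    qed
  qed
  then show "c \<in> ch v \<Longrightarrow> descendant (lul c) c \<and> descendant (lul c) v"
    using mem_children_iff child_descendant descendant_trans by metis
qed

lemma gdist_lul_child: "c \<in> ch v \<Longrightarrow> gdist adj wt v (lul c) = depth (lul c) - depth v"
  using descendant_lul gdist_descendant by blast

lemma lk_eq_max:
  assumes v: "v \<in> V" "\<not> (v \<noteq> r \<and> ch v = {})"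
  shows "lk v = max 1 (\<Sum>u \<in> ch v. lk u - (if lk u = 1 \<and> depth (lul u) - depth v \<le> depth v + q then 1 else 0))"
proof -
  have "lk v = max 1 (\<Sum>u \<in> ch v. lk u -
      (if lk u = 1 \<and> gdist adj wt v (lul u) \<le> gdist adj wt r v + q then 1 else 0))"
    using labels v unfolding valid_labels_def is_leaf_def by blast
  also have "(\<Sum>u \<in> ch v. lk u - (if lk u = 1 \<and> gdist adj wt v (lul u) \<le> gdist adj wt r v + q then 1 else 0))
      = (\<Sum>u \<in> ch v. lk u - (if lk u = 1 \<and> depth (lul u) - depth v \<le> depth v + q then 1 else 0))"
    by (rule sum.cong) (auto simp: gdist_lul_child gdist_root v(1))
  finally show ?thesis .
qed

lemma luc_maximal:
  assumes v: "v \<in> V" "ch v \<noteq> {}"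
  shows "\<exists>u \<in> ch v. luc v = Some u \<and> lul v = lul u \<and> (\<forall>u' \<in> ch v. depth (lul u') \<le> depth (lul u))"
proof -
  obtain u where "u \<in> ch v" "luc v = Some u" "lul v = lul u"
      "\<forall>u' \<in> ch v. gdist adj wt v (lul u') \<le> gdist adj wt v (lul u)"
    using labels v unfolding valid_labels_def is_leaf_def by blast
  then show ?thesis using gdist_lul_child by (intro bexI[of _ u]) auto
qed

lemma lk_pos: "v \<in> V \<Longrightarrow> 1 \<le> lk v"
  using leaf_labels lk_eq_max by fastforce

lemma lul_far_if_lk_ge_2: "x \<in> V \<Longrightarrow> 2 \<le> lk x \<Longrightarrow> q + 2 * depth x < depth (lul x)"
proof (induction x rule: subtree_induct)
  case (step x)
  let ?t = "\<lambda>u. lk u - (if lk u = 1 \<and> depth (lul u) - depth x \<le> depth x + q then 1 else 0)"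
  have not_leaf: "\<not> (x \<noteq> r \<and> ch x = {})" using leaf_labels[OF step.hyps] step.prems by auto
  then have "2 \<le> (\<Sum>u \<in> ch x. ?t u)" using lk_eq_max[OF step.hyps] step.prems by simp
  then obtain c where c: "c \<in> ch x" "?t c \<noteq> 0" by (metis (no_types, lifting) not_numeral_le_zero sum.neutral)
  have "q + 2 * depth x < depth (lul c)"
  proof (cases "2 \<le> lk c")
    case True
    then show ?thesis
      using step.IH[OF c(1) True] depth_mono child_descendant[OF c(1)] by fastforce
  next
    case False
    then have "lk c = 1" using lk_pos child_descendant[OF c(1)] mem_children_iff c(1) by fastforce
    then show ?thesis using c(2) by (auto split: if_splits)
  qed
  moreover obtain u where "luc x = Some u" "lul x = lul u" "\<forall>u' \<in> ch x. depth (lul u') \<le> depth (lul u)"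
    using luc_maximal[OF step.hyps] c(1) by blast
  ultimately show ?case using c(1) by fastforce
qed

definition returns :: "'v \<Rightarrow> 'v \<Rightarrow> bool" where
  "returns v c \<longleftrightarrow> Some c \<noteq> luc v \<and> gdist adj wt v (lul c) \<le> gdist adj wt r v + q"

lemma returns_iff: "c \<in> ch v \<Longrightarrow> returns v c \<longleftrightarrow> Some c \<noteq> luc v \<and> depth (lul c) - depth v \<le> depth v + q"
  unfolding returns_def using gdist_lul_child gdist_root child_descendant by simp

lemma lk_eq_1_if_close:
  assumes c: "c \<in> ch v" and close: "depth (lul c) - depth v \<le> depth v + q"
  shows "lk c = 1"
proof (rule ccontr)
  assume "lk c \<noteq> 1"
  moreover have "c \<in> V" using c mem_children_iff by simp
  ultimately have "q + 2 * depth c < depth (lul c)" using lk_pos lul_far_if_lk_ge_2 by fastforce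
  moreover have "depth v \<le> depth c" using child_descendant[OF c] depth_mono by blast
  ultimately show False using close by simp
qed

lemma lk_eq_sum_returns:
  assumes v: "v \<in> V" "ch v \<noteq> {}"
  shows "(\<Sum>c \<in> ch v. lk c - (if returns v c then 1 else 0)) = lk v"
proof -
  obtain u where u: "u \<in> ch v" "luc v = Some u" "\<forall>u' \<in> ch v. depth (lul u') \<le> depth (lul u)"
    using luc_maximal[OF v] by blast
  have lk_v: "lk v = max 1 (\<Sum>c \<in> ch v. lk c - (if lk c = 1 \<and> depth (lul c) - depth v \<le> depth v + q then 1 else 0))"
    using lk_eq_max v by simp
  show ?thesis
  proof (cases "depth (lul u) - depth v \<le> depth v + q")
    case True
    then have close: "c \<in> ch v \<Longrightarrow> depth (lul c) - depth v \<le> depth v + q" for c using u(3) by force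
    then have "lk c = 1" if "c \<in> ch v" for c using lk_eq_1_if_close that by blast
    then have "lk v = 1" "(\<Sum>c \<in> ch v. lk c - (if returns v c then 1 else 0)) = (\<Sum>c \<in> ch v. if c = u then 1 else 0)"
      using lk_v close by (auto simp: returns_iff u(2) intro!: sum.cong)
    then show ?thesis using u(1) finite_children by simp
  next
    case False
    have "(\<Sum>c \<in> ch v. lk c - (if returns v c then 1 else 0)) =
        (\<Sum>c \<in> ch v. lk c - (if lk c = 1 \<and> depth (lul c) - depth v \<le> depth v + q then 1 else 0))"
      using returns_iff lk_eq_1_if_close False u(2) by (intro sum.cong) auto
    moreover have "lk u - (if returns v u then 1 else 0) \<le> (\<Sum>c \<in> ch v. lk c - (if returns v c then 1 else 0))"
      using u(1) finite_children by (intro member_le_sum) auto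
    moreover have "\<not> returns v u" using returns_iff[OF u(1)] u(2) by simp
    ultimately show ?thesis using lk_v lk_pos[of u] u(1) mem_children_iff by simp
  qed
qed

lemma real_lk_eq_sum_returns:
  assumes "v \<in> V" "ch v \<noteq> {}"
  shows "real (lk v) = (\<Sum>c \<in> ch v. real (lk c) - (if returns v c then 1 else 0))"
proof -
  have "real (lk v) = (\<Sum>c \<in> ch v. real (lk c - (if returns v c then 1 else 0)))"
    using lk_eq_sum_returns[OF assms] by (metis of_nat_sum)
  also have "\<dots> = (\<Sum>c \<in> ch v. real (lk c) - (if returns v c then 1 else 0))"
    using lk_pos mem_children_iff by (intro sum.cong) (auto simp: of_nat_diff)
  finally show ?thesis .
qed

(* X is the cost of the strategy inside the subtree of v once its lk v agents stand at v; bringing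
   them there from the root costs lk v * (q + depth v). *)
definition cost_bounded :: "'v \<Rightarrow> real \<Rightarrow> bool" where
  "cost_bounded v X \<longleftrightarrow> (\<forall>P. 1 \<le> agents_below v P \<longrightarrow>
     X + real (lk v) * (q + depth v) \<le> subtree_potential v P + real (agents_below v P) * (q + depth v))"

definition child_cost :: "'v \<Rightarrow> 'v \<Rightarrow> real \<Rightarrow> real" where
  "child_cost v c X = real (lk c) * w c + X + (if returns v c then depth (lul c) - depth v else 0)"

lemma cost_bounded_occupied:
  assumes "cost_bounded c X" "c \<in> ch v" "1 \<le> agents_below c P"
  shows "X + real (lk c) * (q + depth v + w c) \<le>
    w c * traversals (agents_below c P) + subtree_potential c P + real (agents_below c P) * (q + depth v)"
proof -
  have "depth c = w c + depth v" using assms(2) depth_parent mem_children_iff by auto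
  then show ?thesis using assms unfolding cost_bounded_def traversals_def by (auto simp: algebra_simps)
qed

lemma cost_bounded_vacant:
  assumes "cost_bounded c X" "c \<in> ch v" "agents_below c P = 0"
  shows "X + real (lk c) * (q + depth v + w c) \<le>
    w c * traversals (agents_below c P) + subtree_potential c P + (q + depth v - (depth (lul c) - depth v))"
proof -
  have "descendant (lul c) c" using descendant_lul[OF assms(2)] by simp
  then have "agents_below c [lul c] = 1" by (simp add: agents_below_single)
  then have "X + real (lk c) * (q + depth c) \<le> subtree_potential c [lul c] + (q + depth c)"
    using assms(1) unfolding cost_bounded_def by (elim allE[of _ "[lul c]"]) simp
  moreover have "depth c = w c + depth v" using assms(2) depth_parent mem_children_iff by auto
  ultimately show ?thesis
    using subtree_potential_single[OF \<open>descendant (lul c) c\<close>] subtree_potential_no_agents[OF assms(3)] assms(3)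
    unfolding traversals_def by (simp add: algebra_simps)
qed

lemma cost_bounded_inner:
  assumes v: "v \<in> V" "ch v \<noteq> {}" and children: "\<And>c. c \<in> ch v \<Longrightarrow> cost_bounded c (X c)"
  shows "cost_bounded v (\<Sum>c \<in> ch v. child_cost v c (X c))"
  unfolding cost_bounded_def
proof (intro allI impI)
  fix P assume occupied: "1 \<le> agents_below v P"
  define K where "K = q + depth v"
  obtain u0 where u0: "u0 \<in> ch v" "luc v = Some u0" "\<forall>c \<in> ch v. depth (lul c) \<le> depth (lul u0)"
    using luc_maximal[OF v] by blast
  define \<delta> where "\<delta> c = K - (depth (lul c) - depth v)" for c
  define A where "A c = X c + real (lk c) * (K + w c)" for c
  define L where "L c = w c * traversals (agents_below c P) + subtree_potential c P + real (agents_below c P) * K" for c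
  define E where "E = (real (agents_below v P) - (\<Sum>c \<in> ch v. real (agents_below c P))) * K"
  have "0 \<le> K" using q_nonneg depth_nonneg v(1) unfolding K_def by simp
  have exchange: "(\<Sum>c \<in> ch v. A c - (if returns v c then \<delta> c else 0)) \<le> (\<Sum>c \<in> ch v. L c) + E"
  proof (rule sum_exchange_le[where vacant = "\<lambda>c. agents_below c P = 0"])
    show "returns v c \<longleftrightarrow> c \<noteq> u0 \<and> 0 \<le> \<delta> c" if "c \<in> ch v" for c
      using returns_iff[OF that] u0(2) unfolding \<delta>_def K_def by auto
    show "\<delta> u0 \<le> \<delta> c" if "c \<in> ch v" for c
      using u0(3) that unfolding \<delta>_def by simp
    show "A c \<le> L c" if "c \<in> ch v" "agents_below c P \<noteq> 0" for c
      using cost_bounded_occupied[OF children[OF that(1)] that(1)] that unfolding A_def L_def K_def by simp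
    show "A c \<le> L c + \<delta> c" if "c \<in> ch v" "agents_below c P = 0" for c
      using cost_bounded_vacant[OF children[OF that(1)] that] that(2) unfolding A_def L_def K_def \<delta>_def by simp
    have "(\<Sum>c \<in> ch v. real (agents_below c P)) \<le> real (agents_below v P)"
      using sum_agents_below_children[OF v(1), of P] by (metis of_nat_le_iff of_nat_sum)
    then show "0 \<le> E" using \<open>0 \<le> K\<close> unfolding E_def by simp
    show "\<delta> u0 \<le> E" if "\<forall>c \<in> ch v. agents_below c P = 0"
    proof -
      have "depth v \<le> depth (lul u0)" using descendant_lul[OF u0(1)] depth_mono by blast
      then have "\<delta> u0 \<le> K" unfolding \<delta>_def by simp
      also have "\<dots> \<le> real (agents_below v P) * K" using occupied \<open>0 \<le> K\<close> by (simp add: mult_le_cancel_right1)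
      finally show ?thesis using that unfolding E_def by simp
    qed
  qed (use u0(1) finite_children in auto)
  have "(\<Sum>c \<in> ch v. child_cost v c (X c)) + real (lk v) * K =
      (\<Sum>c \<in> ch v. child_cost v c (X c) + (real (lk c) - (if returns v c then 1 else 0)) * K)"
    using real_lk_eq_sum_returns[OF v] by (simp add: sum.distrib sum_distrib_right)
  also have "\<dots> = (\<Sum>c \<in> ch v. A c - (if returns v c then \<delta> c else 0))"
    unfolding child_cost_def A_def \<delta>_def by (intro sum.cong) (auto simp: algebra_simps)
  finally have "(\<Sum>c \<in> ch v. child_cost v c (X c)) + real (lk v) * K =
      (\<Sum>c \<in> ch v. A c - (if returns v c then \<delta> c else 0))" .
  moreover have "subtree_potential v P + real (agents_below v P) * K = (\<Sum>c \<in> ch v. L c) + E"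
    unfolding subtree_potential_children[OF v(1)] L_def E_def
    by (simp add: sum.distrib sum_distrib_left sum_distrib_right algebra_simps)
  ultimately show "(\<Sum>c \<in> ch v. child_cost v c (X c)) + real (lk v) * (q + depth v)
      \<le> subtree_potential v P + real (agents_below v P) * (q + depth v)"
    using exchange unfolding K_def by simp
qed

lemma cost_bounded_node:
  assumes v: "v \<in> V" and children: "\<And>c. c \<in> ch v \<Longrightarrow> cost_bounded c (X c)"
  shows "cost_bounded v (\<Sum>c \<in> ch v. child_cost v c (X c))"
proof (cases "ch v = {}")
  case True
  then have "lk v = 1" using leaf_labels lk_eq_max v by (cases "v = r") auto
  moreover have "0 \<le> q + depth v" using q_nonneg depth_nonneg v by simp
  ultimately show ?thesis
    using True subtree_potential_nonneg unfolding cost_bounded_def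
    by (auto simp: mult_le_cancel_right1 intro: add_increasing)
qed (use cost_bounded_inner assms in blast)

abbreviation explore_at :: "'v \<Rightarrow> 'v list \<Rightarrow> 'v move list \<Rightarrow> bool" where
  "explore_at \<equiv> costexpl V r par w q lk lul luc"

abbreviation explore_children :: "'v \<Rightarrow> 'v list \<Rightarrow> 'v list \<Rightarrow> 'v move list \<Rightarrow> bool" where
  "explore_children \<equiv> cexpl_loop V r par w q lk lul luc"

definition return_moves :: "'v \<Rightarrow> 'v \<Rightarrow> 'v list \<Rightarrow> 'v move list \<Rightarrow> bool" where
  "return_moves v c p B \<longleftrightarrow>
     (if returns v c
      then \<exists>j n. j < length p \<and> p ! j = lul c \<and> (par ^^ n) (lul c) = v \<and>
                 (\<forall>m < n. (par ^^ m) (lul c) \<noteq> v) \<and> B = climb j (lul c) n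
      else B = [])"

lemma return_moves_sound:
  assumes c: "c \<in> ch v" and B: "return_moves v c p B"
  shows "move_cost wt q r p B = (if returns v c then depth (lul c) - depth v else 0) \<and> valid_moves adj r p B"
proof (cases "returns v c")
  case True
  then obtain j n where j: "j < length p" "p ! j = lul c"
      and n: "(par ^^ n) (lul c) = v" "\<forall>m < n. (par ^^ m) (lul c) \<noteq> v" and B: "B = climb j (lul c) n"
    using B unfolding return_moves_def by auto
  obtain n' where n': "n' \<le> level (lul c)" "(par ^^ n') (lul c) = v"
    using descendant_lul[OF c] unfolding descendant_def by blast
  then have "\<not> n' < n" using n(2) by blast
  then have "n \<le> level (lul c)" using n'(1) by simp
  moreover have "lul c \<in> V" using descendant_lul[OF c] descendant_in_V by blast
  ultimately show ?thesis using True move_cost_valid_climb[OF j] n(1) B by simp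
qed (use B in \<open>simp add: return_moves_def\<close>)

lemma return_moves_exist:
  assumes c: "c \<in> ch v" and j: "j < length p" "p ! j = lul c"
  shows "\<exists>B. return_moves v c p B \<and> run r p B = (if returns v c then p[j := v] else p)"
proof (cases "returns v c")
  case True
  have "\<exists>n. (par ^^ n) (lul c) = v" using descendant_lul[OF c] unfolding descendant_def by blast
  then obtain n where n: "(par ^^ n) (lul c) = v" "\<forall>m < n. (par ^^ m) (lul c) \<noteq> v"
    using exists_least_iff[of "\<lambda>n. (par ^^ n) (lul c) = v"] by blast
  have "n \<noteq> 0"
  proof
    assume "n = 0"
    then have "lul c = v" using n(1) by simp
    then show False using descendant_lul[OF c] not_descendant_child[OF c] by simp
  qed
  then have "run r p (climb j (lul c) n) = p[j := v]" using run_climb[OF j(1)] n(1) by simp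
  then show ?thesis using True j n unfolding return_moves_def by (intro exI[of _ "climb j (lul c) n"]) auto
qed (simp add: return_moves_def)

lemma child_round_sound:
  assumes c: "c \<in> ch v"
    and I: "distinct I" "length I = lk c" "\<forall>i \<in> set I. i < length pos \<and> pos ! i = v"
    and M: "M = map (\<lambda>i. Move i c) I"
    and R: "valid_moves adj r (run r pos M) R" "subtree c \<subseteq> insert c (visited r (run r pos M) R)"
    and B: "return_moves v c (run r pos (M @ R)) B"
  shows "valid_moves adj r pos (M @ R @ B) \<and> subtree c \<subseteq> visited r pos (M @ R @ B) \<and>
    move_cost wt q r pos (M @ R @ B) = child_cost v c (move_cost wt q r (run r pos M) R)"
proof -
  have "c \<in> V" "c \<noteq> r" "par c = v" using c mem_children_iff by auto
  then have "adj v c" using parent_in_V unfolding tadj_def by auto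
  then have M_sound: "valid_moves adj r pos M" "move_cost wt q r pos M = real (lk c) * w c"
    using valid_moves_move_agents[OF I(1,3)] move_cost_move_agents[OF I(1,3)] I(2) wt_child[OF c] M
    by auto
  have B_sound: "valid_moves adj r (run r (run r pos M) R) B"
      "move_cost wt q r (run r (run r pos M) R) B = (if returns v c then depth (lul c) - depth v else 0)"
    using return_moves_sound[OF c B] by (simp_all add: run_append)
  have "I \<noteq> []" using I(2) lk_pos[OF \<open>c \<in> V\<close>] by auto
  then obtain i where i: "i \<in> set I" by (cases I) auto
  have "\<forall>k \<in> set I. k < length pos" using I(3) by auto
  then have "run r pos M = map (\<lambda>k. if k \<in> set I then c else pos ! k) [0..<length pos]"
    using run_move_agents[OF I(1)] M by simp
  then have "run r pos M ! i = c" "i < length (run r pos M)" using i I(3) by auto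
  then have "c \<in> set (run r pos M)" by (metis nth_mem)
  then have "c \<in> visited r (run r pos M) R" using set_subset_visited[of "run r pos M" r R] by blast
  then have "subtree c \<subseteq> visited r pos (M @ R @ B)"
    using R(2) visited_append[of r pos M "R @ B"] visited_append[of r "run r pos M" R B] by auto
  then show ?thesis
    using M_sound R(1) B_sound
    by (simp add: valid_moves_append move_cost_append run_append child_cost_def)
qed

lemma explore_node_sound:
  assumes v: "v \<in> V" and cs: "distinct cs" "set cs = ch v"
    and visited: "(\<Union>c \<in> set cs. subtree c) \<subseteq> visited r pos S"
    and X: "\<forall>c \<in> set cs. cost_bounded c (X c)" "move_cost wt q r pos S = (\<Sum>c \<leftarrow> cs. child_cost v c (X c))"
  shows "subtree v \<subseteq> insert v (visited r pos S) \<and> cost_bounded v (move_cost wt q r pos S)"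
proof
  show "subtree v \<subseteq> insert v (visited r pos S)" using subtree_remove_self[OF v] visited cs(2) by auto
  have "move_cost wt q r pos S = (\<Sum>c \<in> ch v. child_cost v c (X c))"
    using X(2) sum_list_distinct_conv_sum_set[OF cs(1)] cs(2) by simp
  then show "cost_bounded v (move_cost wt q r pos S)" using cost_bounded_node[OF v, of X] X(1) cs(2) by simp
qed

lemma explore_children_cons_sound:
  assumes "c \<notin> set cs"
    and round: "valid_moves adj r pos T" "subtree c \<subseteq> visited r pos T" "cost_bounded c Y"
      "move_cost wt q r pos T = child_cost v c Y"
    and rest: "valid_moves adj r (run r pos T) S" "(\<Union>c \<in> set cs. subtree c) \<subseteq> visited r (run r pos T) S"
      "\<forall>c \<in> set cs. cost_bounded c (X c)" "move_cost wt q r (run r pos T) S = (\<Sum>c \<leftarrow> cs. child_cost v c (X c))"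
  shows "valid_moves adj r pos (T @ S) \<and> (\<Union>c' \<in> set (c # cs). subtree c') \<subseteq> visited r pos (T @ S) \<and>
    (\<exists>X. (\<forall>c' \<in> set (c # cs). cost_bounded c' (X c')) \<and>
      move_cost wt q r pos (T @ S) = (\<Sum>c' \<leftarrow> c # cs. child_cost v c' (X c')))"
proof -
  define X' where "X' = X(c := Y)"
  have "(\<Sum>c' \<leftarrow> cs. child_cost v c' (X' c')) = (\<Sum>c' \<leftarrow> cs. child_cost v c' (X c'))"
    using assms(1) unfolding X'_def by (intro arg_cong[where f = sum_list] map_cong) auto
  then have "move_cost wt q r pos (T @ S) = (\<Sum>c' \<leftarrow> c # cs. child_cost v c' (X' c'))"
    using round(4) rest(4) move_cost_append[of wt q r pos T S] unfolding X'_def by simp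
  moreover have "\<forall>c' \<in> set (c # cs). cost_bounded c' (X' c')"
    using rest(3) round(3) assms(1) unfolding X'_def by auto
  moreover have "valid_moves adj r pos (T @ S)"
    using round(1) rest(1) valid_moves_append[of adj r pos T S] by simp
  moreover have "(\<Union>c' \<in> set (c # cs). subtree c') \<subseteq> visited r pos (T @ S)"
    using round(2) rest(2) visited_append[of r pos T S] by auto
  ultimately show ?thesis by blast
qed

lemma explore_sound:
  shows "explore_at v pos S \<Longrightarrow> v \<in> V \<longrightarrow> valid_moves adj r pos S \<and>
      subtree v \<subseteq> insert v (visited r pos S) \<and> cost_bounded v (move_cost wt q r pos S)"
    and "explore_children v cs pos S \<Longrightarrow> v \<in> V \<longrightarrow> set cs \<subseteq> ch v \<longrightarrow> distinct cs \<longrightarrow>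
      valid_moves adj r pos S \<and> (\<Union>c \<in> set cs. subtree c) \<subseteq> visited r pos S \<and>
      (\<exists>X. (\<forall>c \<in> set cs. cost_bounded c (X c)) \<and> move_cost wt q r pos S = (\<Sum>c \<leftarrow> cs. child_cost v c (X c)))"
proof (induction rule: costexpl_cexpl_loop.inducts)
  case (ce_node cs v pos S)
  show ?case
  proof
    assume v: "v \<in> V"
    with ce_node obtain X where "valid_moves adj r pos S" "(\<Union>c \<in> set cs. subtree c) \<subseteq> visited r pos S"
        "\<forall>c \<in> set cs. cost_bounded c (X c)" "move_cost wt q r pos S = (\<Sum>c \<leftarrow> cs. child_cost v c (X c))"
      by auto
    with explore_node_sound[OF v ce_node(1,2)] show "valid_moves adj r pos S \<and>
        subtree v \<subseteq> insert v (visited r pos S) \<and> cost_bounded v (move_cost wt q r pos S)" by blast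
  qed
next
  case (ce_nil v pos)
  then show ?case by simp
next
  case (ce_cons I c pos v M R B cs S)
  show ?case
  proof (intro impI)
    assume v: "v \<in> V" and cs: "set (c # cs) \<subseteq> ch v" "distinct (c # cs)"
    have c: "c \<in> ch v" using cs by simp
    then have R: "valid_moves adj r (run r pos M) R" "subtree c \<subseteq> insert c (visited r (run r pos M) R)"
        "cost_bounded c (move_cost wt q r (run r pos M) R)"
      using ce_cons(6) mem_children_iff by auto
    have "return_moves v c (run r pos (M @ R)) B"
      using ce_cons(7) unfolding return_moves_def returns_def climb_def .
    then have round: "valid_moves adj r pos (M @ R @ B)" "subtree c \<subseteq> visited r pos (M @ R @ B)"
        "move_cost wt q r pos (M @ R @ B) = child_cost v c (move_cost wt q r (run r pos M) R)"
      using child_round_sound[OF c ce_cons(1,4,2,3) R(1,2)] by auto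
    obtain X where rest: "valid_moves adj r (run r pos (M @ R @ B)) S"
        "(\<Union>c \<in> set cs. subtree c) \<subseteq> visited r (run r pos (M @ R @ B)) S"
        "\<forall>c \<in> set cs. cost_bounded c (X c)"
        "move_cost wt q r (run r pos (M @ R @ B)) S = (\<Sum>c \<leftarrow> cs. child_cost v c (X c))"
      using ce_cons(9) v cs by auto
    show "valid_moves adj r pos (M @ R @ B @ S) \<and>
        (\<Union>c' \<in> set (c # cs). subtree c') \<subseteq> visited r pos (M @ R @ B @ S) \<and>
        (\<exists>X. (\<forall>c' \<in> set (c # cs). cost_bounded c' (X c')) \<and>
           move_cost wt q r pos (M @ R @ B @ S) = (\<Sum>c' \<leftarrow> c # cs. child_cost v c' (X c')))"
      using explore_children_cons_sound[OF _ round(1,2) R(3) round(3) rest] cs(2) by simp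
  qed
qed

definition realisable :: "'v \<Rightarrow> bool" where
  "realisable v \<longleftrightarrow> (\<forall>pos J. finite J \<longrightarrow> J \<subseteq> {i. i < length pos \<and> pos ! i = v} \<longrightarrow> lk v \<le> card J \<longrightarrow>
     (\<exists>S. explore_at v pos S \<and> length (run r pos S) = length pos \<and>
        (\<forall>i < length pos. i \<notin> J \<longrightarrow> run r pos S ! i = pos ! i) \<and>
        (v \<noteq> r \<longrightarrow> (\<exists>j \<in> J. run r pos S ! j = lul v))))"

lemma descent_exists:
  assumes c: "c \<in> ch v" and realisable: "realisable c"
    and J: "finite J" "J \<subseteq> {i. i < length pos \<and> pos ! i = v}" "lk c \<le> card J"
  obtains I R j where "distinct I" "length I = lk c" "set I \<subseteq> J"
    "explore_at c (run r pos (map (\<lambda>i. Move i c) I)) R"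
    "length (run r pos (map (\<lambda>i. Move i c) I @ R)) = length pos"
    "\<And>i. i < length pos \<Longrightarrow> i \<notin> set I \<Longrightarrow> run r pos (map (\<lambda>i. Move i c) I @ R) ! i = pos ! i"
    "j \<in> set I" "run r pos (map (\<lambda>i. Move i c) I @ R) ! j = lul c"
proof -
  obtain I' where I': "I' \<subseteq> J" "card I' = lk c" using obtain_subset_with_card_n[OF J(3)] by blast
  have "finite I'" using I'(1) J(1) finite_subset by blast
  then obtain I where I: "set I = I'" "distinct I" using finite_distinct_list by blast
  have at_v: "\<forall>i \<in> set I. i < length pos" using I(1) I'(1) J(2) by auto
  let ?M = "map (\<lambda>i. Move i c) I"
  define pM where "pM = run r pos ?M"
  have pM: "length pM = length pos" "\<And>i. i < length pos \<Longrightarrow> pM ! i = (if i \<in> I' then c else pos ! i)"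
    using run_move_agents[OF I(2) at_v] I(1) unfolding pM_def by simp_all
  have I'_at_c: "I' \<subseteq> {i. i < length pM \<and> pM ! i = c}" using pM I(1) at_v by auto
  have "c \<noteq> r" using c mem_children_iff by simp
  then obtain R where R: "explore_at c pM R" "length (run r pM R) = length pM"
      "\<forall>i < length pM. i \<notin> I' \<longrightarrow> run r pM R ! i = pM ! i" "\<exists>j \<in> I'. run r pM R ! j = lul c"
    using realisable[unfolded realisable_def, rule_format, of I' pM] \<open>finite I'\<close> I'_at_c I'(2) by auto
  then obtain j where j: "j \<in> I'" "run r pM R ! j = lul c" by blast
  have run_eq: "run r pos (?M @ R) = run r pM R" unfolding pM_def by (simp add: run_append)
  show thesis
  proof (rule that[of I R j])
    show "distinct I" "set I \<subseteq> J" using I I'(1) by simp_all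
    show "length I = lk c" using distinct_card[OF I(2)] I(1) I'(2) by simp
    show "explore_at c (run r pos ?M) R" using R(1) unfolding pM_def .
    show "length (run r pos (?M @ R)) = length pos" using run_eq R(2) pM(1) by simp
    show "run r pos (?M @ R) ! i = pos ! i" if "i < length pos" "i \<notin> set I" for i
      using run_eq R(3) pM that I(1) by simp
    show "j \<in> set I" "run r pos (?M @ R) ! j = lul c" using j I(1) run_eq by simp_all
  qed
qed

lemma child_round_exists:
  assumes c: "c \<in> ch v" and realisable: "realisable c"
    and J: "finite J" "J \<subseteq> {i. i < length pos \<and> pos ! i = v}" "lk c \<le> card J"
  obtains I R B J' where "distinct I" "length I = lk c" "set I \<subseteq> J"
    "explore_at c (run r pos (map (\<lambda>i. Move i c) I)) R"
    "return_moves v c (run r pos (map (\<lambda>i. Move i c) I @ R)) B"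
    "length (run r pos (map (\<lambda>i. Move i c) I @ R @ B)) = length pos"
    "\<forall>i < length pos. i \<notin> J \<longrightarrow> run r pos (map (\<lambda>i. Move i c) I @ R @ B) ! i = pos ! i"
    "J' \<subseteq> J" "card J' = card J - lk c + (if returns v c then 1 else 0)"
    "\<forall>i \<in> J'. run r pos (map (\<lambda>i. Move i c) I @ R @ B) ! i = v"
    "\<not> returns v c \<Longrightarrow> \<exists>j \<in> J - J'. run r pos (map (\<lambda>i. Move i c) I @ R @ B) ! j = lul c"
proof -
  let ?M = "\<lambda>I. map (\<lambda>i. Move i c) I"
  obtain I R j where I: "distinct I" "length I = lk c" "set I \<subseteq> J"
      and R: "explore_at c (run r pos (?M I)) R" "length (run r pos (?M I @ R)) = length pos"
        "\<And>i. i < length pos \<Longrightarrow> i \<notin> set I \<Longrightarrow> run r pos (?M I @ R) ! i = pos ! i"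
      and j: "j \<in> set I" "run r pos (?M I @ R) ! j = lul c"
    using descent_exists[OF assms] by blast
  define pR where "pR = run r pos (?M I @ R)"
  have "j < length pR" using j(1) I(3) J(2) R(2) unfolding pR_def by auto
  then obtain B where B: "return_moves v c pR B" "run r pR B = (if returns v c then pR[j := v] else pR)"
    using return_moves_exist[OF c] j(2) unfolding pR_def by blast
  have run_eq: "run r pos (?M I @ R @ B) = run r pR B" unfolding pR_def by (simp add: run_append)
  define J' where "J' = (J - set I) \<union> (if returns v c then {j} else {})"
  show thesis
  proof (rule that[of I R B J'])
    show "distinct I" "length I = lk c" "set I \<subseteq> J" using I by simp_all
    show "explore_at c (run r pos (?M I)) R" using R(1) .
    show "return_moves v c (run r pos (?M I @ R)) B" using B(1) unfolding pR_def .
    show "length (run r pos (?M I @ R @ B)) = length pos" using run_eq B(2) R(2) unfolding pR_def by simp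
    show "\<forall>i < length pos. i \<notin> J \<longrightarrow> run r pos (?M I @ R @ B) ! i = pos ! i"
    proof (intro allI impI)
      fix i assume i: "i < length pos" "i \<notin> J"
      then have "i \<notin> set I" "i \<noteq> j" using I(3) j(1) by auto
      then show "run r pos (?M I @ R @ B) ! i = pos ! i" using run_eq B(2) R(3) i(1) unfolding pR_def by simp
    qed
    show "J' \<subseteq> J" using I(3) j(1) unfolding J'_def by auto
    have "card (J - set I) = card J - lk c" using I J(1) by (simp add: card_Diff_subset distinct_card)
    then show "card J' = card J - lk c + (if returns v c then 1 else 0)"
      using J(1) j(1) unfolding J'_def by simp
    show "\<forall>i \<in> J'. run r pos (?M I @ R @ B) ! i = v"
    proof
      fix i assume "i \<in> J'"
      then consider "i \<in> J" "i \<notin> set I" | "returns v c" "i = j"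
        unfolding J'_def by (auto split: if_splits)
      then show "run r pos (?M I @ R @ B) ! i = v"
      proof cases
        case 1
        then have "i < length pos" "pos ! i = v" "i \<noteq> j" using J(2) j(1) by auto
        then show ?thesis using run_eq B(2) R(3) 1 unfolding pR_def by simp
      next
        case 2
        then show ?thesis using run_eq B(2) \<open>j < length pR\<close> by simp
      qed
    qed
    show "\<exists>j \<in> J - J'. run r pos (?M I @ R @ B) ! j = lul c" if "\<not> returns v c"
      using that run_eq B(2) j I(3) unfolding J'_def pR_def by auto
  qed
qed

lemma lk_le_sum_list_returns:
  assumes "set (c # cs) \<subseteq> ch v" "luc v = Some (last (c # cs))"
  shows "lk c \<le> (\<Sum>c' \<leftarrow> c # cs. lk c' - (if returns v c' then 1 else 0))"
proof (cases "cs = []")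
  case True
  then have "\<not> returns v c" using assms(2) by (simp add: returns_def)
  then show ?thesis using True by simp
next
  case False
  then have "last cs \<in> ch v" "\<not> returns v (last cs)" using assms by (auto simp: returns_def)
  then have "1 \<le> lk (last cs) - (if returns v (last cs) then 1 else 0)"
    using lk_pos mem_children_iff by simp
  also have "\<dots> \<le> (\<Sum>c' \<leftarrow> cs. lk c' - (if returns v c' then 1 else 0))"
    using False by (intro member_le_sum_list) auto
  finally show ?thesis by (cases "returns v c") auto
qed

lemma explore_children_exists:
  assumes v: "v \<in> V" and realisable: "\<And>c. c \<in> ch v \<Longrightarrow> realisable c"
  shows "distinct cs \<Longrightarrow> set cs \<subseteq> ch v \<Longrightarrow> (cs \<noteq> [] \<longrightarrow> luc v = Some (last cs)) \<Longrightarrow>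
    finite J \<Longrightarrow> J \<subseteq> {i. i < length pos \<and> pos ! i = v} \<Longrightarrow>
    (\<Sum>c \<leftarrow> cs. lk c - (if returns v c then 1 else 0)) \<le> card J \<Longrightarrow>
    \<exists>S. explore_children v cs pos S \<and> length (run r pos S) = length pos \<and>
      (\<forall>i < length pos. i \<notin> J \<longrightarrow> run r pos S ! i = pos ! i) \<and>
      (cs \<noteq> [] \<longrightarrow> (\<exists>j \<in> J. run r pos S ! j = lul (last cs)))"
proof (induction cs arbitrary: pos J)
  case Nil
  show ?case by (intro exI[of _ "[]"]) (auto intro: ce_nil)
next
  case (Cons c cs)
  let ?rest = "\<Sum>c \<leftarrow> cs. lk c - (if returns v c then 1 else 0)"
  have c: "c \<in> ch v" using Cons.prems(2) by simp
  have card_J: "lk c - (if returns v c then 1 else 0) + ?rest \<le> card J" using Cons.prems(6) by simp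
  have "luc v = Some (last (c # cs))" using Cons.prems(3) by simp
  then have "lk c \<le> card J" using lk_le_sum_list_returns[OF Cons.prems(2)] Cons.prems(6) by simp
  then obtain I R B J' where round: "distinct I" "length I = lk c" "set I \<subseteq> J"
      "explore_at c (run r pos (map (\<lambda>i. Move i c) I)) R"
      "return_moves v c (run r pos (map (\<lambda>i. Move i c) I @ R)) B"
      "length (run r pos (map (\<lambda>i. Move i c) I @ R @ B)) = length pos"
      "\<forall>i < length pos. i \<notin> J \<longrightarrow> run r pos (map (\<lambda>i. Move i c) I @ R @ B) ! i = pos ! i"
      "J' \<subseteq> J" "card J' = card J - lk c + (if returns v c then 1 else 0)"
      "\<forall>i \<in> J'. run r pos (map (\<lambda>i. Move i c) I @ R @ B) ! i = v"
      "\<not> returns v c \<Longrightarrow> \<exists>j \<in> J - J'. run r pos (map (\<lambda>i. Move i c) I @ R @ B) ! j = lul c"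
    using child_round_exists[OF c realisable[OF c] Cons.prems(4,5)] by blast
  let ?M = "map (\<lambda>i. Move i c) I"
  let ?p = "run r pos (?M @ R @ B)"
  have "J' \<subseteq> {i. i < length ?p \<and> ?p ! i = v}" using round(6,8,10) Cons.prems(5) by auto
  moreover have "?rest \<le> card J'" using round(9) card_J \<open>lk c \<le> card J\<close> by simp
  moreover have "finite J'" using round(8) Cons.prems(4) finite_subset by blast
  ultimately obtain S where S: "explore_children v cs ?p S" "length (run r ?p S) = length ?p"
      "\<forall>i < length ?p. i \<notin> J' \<longrightarrow> run r ?p S ! i = ?p ! i"
      "cs \<noteq> [] \<longrightarrow> (\<exists>j \<in> J'. run r ?p S ! j = lul (last cs))"
    using Cons.IH[of J' ?p] Cons.prems(1-3) by auto
  have run_eq: "run r pos (?M @ R @ B @ S) = run r ?p S" by (simp add: run_append)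
  have at_v: "\<forall>i \<in> set I. i < length pos \<and> pos ! i = v" using round(3) Cons.prems(5) by auto
  have "explore_children v (c # cs) pos (?M @ R @ B @ S)"
    by (rule ce_cons[OF round(1,2) at_v refl round(4) _ S(1)])
      (use round(5) in \<open>unfold return_moves_def returns_def climb_def\<close>)
  moreover have "\<forall>i < length pos. i \<notin> J \<longrightarrow> run r pos (?M @ R @ B @ S) ! i = pos ! i"
    using run_eq S(3) round(6,7,8) by auto
  moreover have "\<exists>j \<in> J. run r pos (?M @ R @ B @ S) ! j = lul (last (c # cs))"
  proof (cases "cs = []")
    case True
    then have "\<not> returns v c" using Cons.prems(3) by (simp add: returns_def)
    then obtain j where j: "j \<in> J" "j \<notin> J'" "?p ! j = lul c" using round(11) by blast
    then have "run r ?p S ! j = lul c" using S(3) round(6) Cons.prems(5) by auto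
    then show ?thesis using run_eq j(1) True by auto
  next
    case False
    then show ?thesis using run_eq S(4) round(8) by auto
  qed
  ultimately show ?case using run_eq S(2) round(6) by (intro exI[of _ "?M @ R @ B @ S"]) auto
qed

lemma realisable_all: "v \<in> V \<Longrightarrow> realisable v"
proof (induction v rule: subtree_induct)
  case (step v)
  show ?case unfolding realisable_def
  proof (intro allI impI)
    fix pos J assume J: "finite J" "J \<subseteq> {i. i < length pos \<and> pos ! i = v}" "lk v \<le> card J"
    show "\<exists>S. explore_at v pos S \<and> length (run r pos S) = length pos \<and>
        (\<forall>i < length pos. i \<notin> J \<longrightarrow> run r pos S ! i = pos ! i) \<and> (v \<noteq> r \<longrightarrow> (\<exists>j \<in> J. run r pos S ! j = lul v))"
    proof (cases "ch v = {}")
      case True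
      have "explore_at v pos []" by (rule ce_node[where cs = "[]"]) (use True in \<open>auto intro: ce_nil\<close>)
      moreover have "\<exists>j \<in> J. pos ! j = lul v" if "v \<noteq> r"
      proof -
        have "lk v = 1" "lul v = v" using leaf_labels[OF step.hyps that True] by auto
        then obtain j where "j \<in> J" using J(3) by fastforce
        then show ?thesis using J(2) \<open>lul v = v\<close> by auto
      qed
      ultimately show ?thesis by (intro exI[of _ "[]"]) auto
    next
      case False
      obtain u0 where u0: "u0 \<in> ch v" "luc v = Some u0" "lul v = lul u0"
        using luc_maximal[OF step.hyps False] by blast
      obtain xs where xs: "set xs = ch v - {u0}" "distinct xs"
        using finite_distinct_list[of "ch v - {u0}"] finite_children by blast
      let ?cs = "xs @ [u0]"
      have cs: "distinct ?cs" "set ?cs = ch v" "?cs \<noteq> [] \<longrightarrow> luc v = Some (last ?cs)" using xs u0 by auto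
      have "(\<Sum>c \<leftarrow> ?cs. lk c - (if returns v c then 1 else 0)) =
          (\<Sum>c \<in> set ?cs. lk c - (if returns v c then 1 else 0))"
        by (rule sum_list_distinct_conv_sum_set[OF cs(1)])
      also have "\<dots> = lk v" unfolding cs(2) by (rule lk_eq_sum_returns[OF step.hyps False])
      finally obtain S where S: "explore_children v ?cs pos S" "length (run r pos S) = length pos"
          "\<forall>i < length pos. i \<notin> J \<longrightarrow> run r pos S ! i = pos ! i" "\<exists>j \<in> J. run r pos S ! j = lul u0"
        using explore_children_exists[OF step.hyps step.IH cs(1) _ cs(3) J(1,2)] cs(2) J(3) by auto
      have "explore_at v pos S" by (rule ce_node[OF cs(1) cs(2) cs(3) S(1)])
      then show ?thesis using S u0(3) by auto
    qed
  qed
qed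

lemma explore_root_exists: "\<exists>S. explore_at r (replicate (lk r) r) S"
proof -
  have "{..<lk r} \<subseteq> {i. i < length (replicate (lk r) r) \<and> replicate (lk r) r ! i = r}" by auto
  then show ?thesis
    using realisable_all[OF root_in_V, unfolded realisable_def, rule_format, of "{..<lk r}" "replicate (lk r) r"]
    by auto
qed

lemma explore_root_cost_optimal:
  assumes S: "explore_at r (replicate (lk r) r) S"
  shows "cost_optimal V adj wt q r (replicate (lk r) Invoke @ S)"
proof -
  let ?start = "replicate (lk r) r" and ?S = "replicate (lk r) Invoke @ S"
  have sound: "valid_moves adj r ?start S" "subtree r \<subseteq> insert r (visited r ?start S)"
      "cost_bounded r (move_cost wt q r ?start S)"
    using explore_sound(1)[OF S] root_in_V by auto
  have start: "run r [] (replicate (lk r) Invoke) = ?start" using run_invokes[of r "[]"] by simp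
  have "r \<in> visited r ?start S" using set_subset_visited[of ?start r S] lk_pos[OF root_in_V] by auto
  then have "explores V adj r ?S"
    unfolding explores_def valid_moves_append visited_append start
    using valid_moves_invokes sound(1,2) subtree_root by auto
  moreover have "cost wt q r ?S \<le> cost wt q r S'" if "explores V adj r S'" for S'
  proof -
    let ?P = "run r [] S'"
    have P: "?P \<noteq> []" "set ?P \<subseteq> V" "q * real (length ?P) + subtree_potential r ?P \<le> cost wt q r S'"
      using explores_cost_ge[OF that] by auto
    then have "1 \<le> agents_below r ?P" using agents_below_root by (cases ?P) auto
    then have "move_cost wt q r ?start S + real (lk r) * (q + depth r) \<le>
        subtree_potential r ?P + real (agents_below r ?P) * (q + depth r)"
      using sound(3) unfolding cost_bounded_def by blast
    then have "move_cost wt q r ?start S + real (lk r) * q \<le> subtree_potential r ?P + real (length ?P) * q"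
      using agents_below_root[OF P(2)] depth_root by simp
    moreover have "cost wt q r ?S = real (lk r) * q + move_cost wt q r ?start S"
      unfolding cost_def move_cost_append start move_cost_invokes ..
    ultimately show ?thesis using P(3) by (simp add: algebra_simps)
  qed
  ultimately show ?thesis unfolding cost_optimal_def by blast
qed

end

theorem theorem2:
  fixes V :: "'v set" and r :: 'v and par :: "'v \<Rightarrow> 'v" and w :: "'v \<Rightarrow> real"
    and q :: real and lk :: "'v \<Rightarrow> nat" and lul :: "'v \<Rightarrow> 'v" and luc :: "'v \<Rightarrow> 'v option"
  assumes tree: "rooted_tree V r par"
    and pos_w: "\<forall>v \<in> V - {r}. w v > 0"
    and no_single_child: "\<forall>v \<in> V - {r}. card (children V r par v) \<noteq> 1"
    and q_nonneg: "q \<ge> 0"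
    and labels: "valid_labels V r par w q lk lul luc"
  shows "(\<exists>S. costexpl V r par w q lk lul luc r (replicate (lk r) r) S) \<and>
         (\<forall>S. costexpl V r par w q lk lul luc r (replicate (lk r) r) S \<longrightarrow>
              cost_optimal V (tadj V r par) (twt r par w) q r (replicate (lk r) Invoke @ S))"
proof -
  interpret costexpl_labels V r par w q lk lul luc
    using tree pos_w q_nonneg labels by unfold_locales auto
  show ?thesis using explore_root_exists explore_root_cost_optimal by blast
qed

end
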